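(* Consider the stochastic $K$-armed bandit with losses supported in $[0,1]$ and run the Regularized-EXP3 algorithm described in the context with mirror map $\phi_\alpha$, $\alpha\in[0,1]$, and parameters $\eta,\lambda>0$ and $\varepsilon>0$ with $K\varepsilon\le1$. Then for every $y\in\Delta_\varepsilon$, $$\mathbb E\left[f_{\lambda,\varepsilon}(\overline x_T)-f_{\lambda,\varepsilon}(y)\right]\le\mathbb E\left[\frac{D_{\phi_\alpha}(y,x_1)}{\eta T}+\frac\eta T\sum_{t=1}^T\|\widehat\ell_t\|^2_{x_t,\alpha}+\frac{\eta\lambda^2}{T}\sum_{t=1}^T\|\nabla R_\varepsilon(x_t)\|^2_{x_t,\alpha}\right],$$ where $\|v\|^2_{x_t,\alpha}=\sum_{i=1}^Kv_i^2x_{t,i}^{2-\alpha}$ and $\overline x_T=\frac1T\sum_{t=1}^Tx_t$.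
   Context: Stochastic $K$-armed bandit: arm $a$ has loss distribution $\mathcal P_a$ on $[0,1]$ with mean $\mu_a$; at round $t$ the learner picks $A_t$ and observes $\ell_t\sim\mathcal P_{A_t}$. $f_{\lambda,\varepsilon}(x)=\langle\mu,x\rangle+\lambda R_\varepsilon(x)$ with $R_\varepsilon(x)=-\sum_i\ln x_i+\frac1\varepsilon\sum_ix_i$. $\Delta_\varepsilon=\{x\in\mathbb R^K: x_j\ge\varepsilon\ \forall j,\ \sum_jx_j=1\}$. Mirror maps on $\mathbb R^K_{>0}$: $\phi_\alpha(x)=-\sum_i\frac{x_i^\alpha-\alpha x_i-(1-\alpha)}{\alpha(1-\alpha)}$ for $0<\alpha<1$, $\phi_0(x)=-\sum_i(\log x_i-x_i+1)$, $\phi_1(x)=\sum_i(x_i\log x_i-x_i+1)$. $D_\phi(x,y)=\phi(x)-\phi(y)-\langle\nabla\phi(y),x-y\rangle$. Regularized-EXP3: $z_1=(1/K,\dots,1/K)$; for $t=1,\dots,T$: $x_t=\arg\min_{x\in\Delta_\varepsilon}D_\phi(x,z_t)$ (so $x_1=z_1$); draw $A_t$ with $\mathbb P(A_t=j\mid\text{past})=x_{t,j}$, observe $\ell_t$; $\widehat\ell_{t,j}=\mathbb I\{A_t=j\}\ell_t/x_{t,j}$; $\widetilde\ell_t=\widehat\ell_t+\lambda\nabla R_\varepsilon(x_t)$; $z_{t+1}=\arg\min_x\{\eta\langle\widetilde\ell_t,x\rangle+D_\phi(x,x_t)\}$. *)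

theory Defs
  imports "HOL-Probability.Probability"
begin

text \<open>Arms are the elements of a finite type 'k (so K = CARD('k)); vectors in R^K are
  functions 'k \<Rightarrow> real.  A history is the list of (arm played, loss observed) pairs.\<close>

definition inner_vec :: "('k::finite \<Rightarrow> real) \<Rightarrow> ('k \<Rightarrow> real) \<Rightarrow> real" where
  "inner_vec u v = (\<Sum>i\<in>UNIV. u i * v i)"

definition mirror_phi :: "real \<Rightarrow> ('k::finite \<Rightarrow> real) \<Rightarrow> real" where
  "mirror_phi \<alpha> x =
     (if \<alpha> = 0 then - (\<Sum>i\<in>UNIV. ln (x i) - x i + 1)
      else if \<alpha> = 1 then (\<Sum>i\<in>UNIV. x i * ln (x i) - x i + 1)
      else - (\<Sum>i\<in>UNIV. (x i powr \<alpha> - \<alpha> * x i - (1 - \<alpha>)) / (\<alpha> * (1 - \<alpha>))))"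

definition grad_phi :: "real \<Rightarrow> ('k::finite \<Rightarrow> real) \<Rightarrow> ('k \<Rightarrow> real)" where
  "grad_phi \<alpha> x = (\<lambda>i.
     if \<alpha> = 0 then 1 - 1 / x i
     else if \<alpha> = 1 then ln (x i)
     else - (x i powr (\<alpha> - 1) - 1) / (1 - \<alpha>))"

definition bregman :: "real \<Rightarrow> ('k::finite \<Rightarrow> real) \<Rightarrow> ('k \<Rightarrow> real) \<Rightarrow> real" where
  "bregman \<alpha> x y = mirror_phi \<alpha> x - mirror_phi \<alpha> y - inner_vec (grad_phi \<alpha> y) (\<lambda>i. x i - y i)"

definition pos_orthant :: "('k::finite \<Rightarrow> real) set" where
  "pos_orthant = {x. \<forall>i. 0 < x i}"

definition trunc_simplex :: "real \<Rightarrow> ('k::finite \<Rightarrow> real) set" where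
  "trunc_simplex \<epsilon> = {x. (\<forall>j. \<epsilon> \<le> x j) \<and> (\<Sum>j\<in>UNIV. x j) = 1}"

definition R_eps :: "real \<Rightarrow> ('k::finite \<Rightarrow> real) \<Rightarrow> real" where
  "R_eps \<epsilon> x = - (\<Sum>i\<in>UNIV. ln (x i)) + (1 / \<epsilon>) * (\<Sum>i\<in>UNIV. x i)"

definition grad_R_eps :: "real \<Rightarrow> ('k::finite \<Rightarrow> real) \<Rightarrow> ('k \<Rightarrow> real)" where
  "grad_R_eps \<epsilon> x = (\<lambda>i. - 1 / x i + 1 / \<epsilon>)"

definition f_obj :: "('k::finite \<Rightarrow> real) \<Rightarrow> real \<Rightarrow> real \<Rightarrow> ('k \<Rightarrow> real) \<Rightarrow> real" where
  "f_obj \<mu> lam \<epsilon> x = inner_vec \<mu> x + lam * R_eps \<epsilon> x"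

definition local_norm_sq :: "real \<Rightarrow> ('k::finite \<Rightarrow> real) \<Rightarrow> ('k \<Rightarrow> real) \<Rightarrow> real" where
  "local_norm_sq \<alpha> x v = (\<Sum>i\<in>UNIV. (v i)\<^sup>2 * x i powr (2 - \<alpha>))"

definition uniform_vec :: "'k::finite \<Rightarrow> real" where
  "uniform_vec = (\<lambda>_. 1 / real CARD('k))"

definition proj_step :: "real \<Rightarrow> real \<Rightarrow> ('k::finite \<Rightarrow> real) \<Rightarrow> ('k \<Rightarrow> real)" where
  "proj_step \<alpha> \<epsilon> z = arg_min_on (\<lambda>x. bregman \<alpha> x z) (trunc_simplex \<epsilon>)"

definition loss_est :: "('k::finite \<Rightarrow> real) \<Rightarrow> 'k \<Rightarrow> real \<Rightarrow> ('k \<Rightarrow> real)" where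
  "loss_est x a l = (\<lambda>j. if j = a then l / x j else 0)"

definition md_step :: "real \<Rightarrow> real \<Rightarrow> real \<Rightarrow> real \<Rightarrow> ('k::finite \<Rightarrow> real) \<Rightarrow> 'k \<Rightarrow> real \<Rightarrow> ('k \<Rightarrow> real)" where
  "md_step \<alpha> \<eta> lam \<epsilon> z a l =
     (let x = proj_step \<alpha> \<epsilon> z;
          lt = (\<lambda>j. loss_est x a l j + lam * grad_R_eps \<epsilon> x j)
      in arg_min_on (\<lambda>w. \<eta> * inner_vec lt w + bregman \<alpha> w x) pos_orthant)"

text \<open>z_t after the history h (of length t-1), and x_t = projection of z_t.\<close>
definition z_of :: "real \<Rightarrow> real \<Rightarrow> real \<Rightarrow> real \<Rightarrow> ('k::finite \<times> real) list \<Rightarrow> ('k \<Rightarrow> real)" where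
  "z_of \<alpha> \<eta> lam \<epsilon> h = foldl (\<lambda>z (a, l). md_step \<alpha> \<eta> lam \<epsilon> z a l) uniform_vec h"

definition x_of :: "real \<Rightarrow> real \<Rightarrow> real \<Rightarrow> real \<Rightarrow> ('k::finite \<times> real) list \<Rightarrow> ('k \<Rightarrow> real)" where
  "x_of \<alpha> \<eta> lam \<epsilon> h = proj_step \<alpha> \<epsilon> (z_of \<alpha> \<eta> lam \<epsilon> h)"

text \<open>Expectation of a function g of the history after n further rounds, starting from the
  history h, when at each round the arm is drawn from the policy pol(history) and the loss
  from P(arm) (iterated integral = law of the interaction process).\<close>
fun hist_exp :: "('k::finite \<Rightarrow> real measure) \<Rightarrow> (('k \<times> real) list \<Rightarrow> 'k \<Rightarrow> real)
                   \<Rightarrow> nat \<Rightarrow> (('k \<times> real) list \<Rightarrow> real) \<Rightarrow> ('k \<times> real) list \<Rightarrow> real" where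
  "hist_exp P pol 0 g h = g h"
| "hist_exp P pol (Suc n) g h =
     (\<Sum>j\<in>UNIV. pol h j * (\<integral>l. hist_exp P pol n g (h @ [(j, l)]) \<partial>(P j)))"

text \<open>Quantities along a full history h of length T (round t = 1..T corresponds to index t-1).\<close>
definition x_round :: "real \<Rightarrow> real \<Rightarrow> real \<Rightarrow> real \<Rightarrow> ('k::finite \<times> real) list \<Rightarrow> nat \<Rightarrow> ('k \<Rightarrow> real)" where
  "x_round \<alpha> \<eta> lam \<epsilon> h t = x_of \<alpha> \<eta> lam \<epsilon> (take t h)"

definition lhat_round :: "real \<Rightarrow> real \<Rightarrow> real \<Rightarrow> real \<Rightarrow> ('k::finite \<times> real) list \<Rightarrow> nat \<Rightarrow> ('k \<Rightarrow> real)" where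
  "lhat_round \<alpha> \<eta> lam \<epsilon> h t = loss_est (x_round \<alpha> \<eta> lam \<epsilon> h t) (fst (h ! t)) (snd (h ! t))"

end

theory Submission
  imports Defs
begin

(* The gap at the average iterate is handled by convexity of f: Jensen and the gradient
   inequality bound it by the average linearised regret (1/T) sum_t <mu + lam grad R(x_t), x_t - y>.
   Replacing mu by the importance-weighted estimate lhat_t changes each summand by a martingale
   difference, because arm j is played with probability x_t,j; so in expectation it suffices to
   bound the regret of online mirror descent on the nonnegative losses lhat_t + lam grad R(x_t).
   Pathwise, the three-point identity and the Pythagorean inequality of the Bregman projection
   telescope to D(y, x_1), leaving the one-step terms D(x_t, z_t+1), which are at most
   (eta^2/2) ||lhat_t + lam grad R(x_t)||^2_{x_t,alpha} because phi'' = s^(alpha-2) and the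
   losses are nonnegative; (a + b)^2 <= 2a^2 + 2b^2 splits the local norm. *)

section \<open>Scalar mirror maps\<close>

definition phi_scalar :: "real \<Rightarrow> real \<Rightarrow> real" where
  "phi_scalar \<alpha> t = (if \<alpha> = 0 then - (ln t - t + 1) else if \<alpha> = 1 then t * ln t - t + 1
      else - ((t powr \<alpha> - \<alpha> * t - (1 - \<alpha>)) / (\<alpha> * (1 - \<alpha>))))"

definition dphi_scalar :: "real \<Rightarrow> real \<Rightarrow> real" where
  "dphi_scalar \<alpha> t = (if \<alpha> = 0 then 1 - 1 / t else if \<alpha> = 1 then ln t
      else - (t powr (\<alpha> - 1) - 1) / (1 - \<alpha>))"

definition bregman_scalar :: "real \<Rightarrow> real \<Rightarrow> real \<Rightarrow> real" where
  "bregman_scalar \<alpha> a b = phi_scalar \<alpha> a - phi_scalar \<alpha> b - dphi_scalar \<alpha> b * (a - b)"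

lemma dphi_scalar_less_1:
  assumes "0 \<le> \<alpha>" "\<alpha> < 1" "0 < t"
  shows "dphi_scalar \<alpha> t = (1 - t powr (\<alpha> - 1)) / (1 - \<alpha>)"
  using assms by (cases "\<alpha> = 0") (auto simp: dphi_scalar_def powr_minus_divide field_simps)

lemma phi_scalar_has_derivative:
  assumes "0 < t"
  shows "(phi_scalar \<alpha> has_real_derivative dphi_scalar \<alpha> t) (at t)"
proof -
  consider "\<alpha> = 0" | "\<alpha> = 1" | "\<alpha> \<noteq> 0" "\<alpha> \<noteq> 1" by blast
  then show ?thesis
  proof cases
    case 3
    have "((\<lambda>t. - ((t powr \<alpha> - \<alpha> * t - (1 - \<alpha>)) / (\<alpha> * (1 - \<alpha>)))) has_real_derivative
           - ((\<alpha> * t powr (\<alpha> - 1) - \<alpha> * 1 - 0) / (\<alpha> * (1 - \<alpha>)))) (at t)"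
      using assms by (intro DERIV_minus DERIV_cdivide DERIV_diff DERIV_cmult DERIV_ident DERIV_const
          has_real_derivative_powr) auto
    moreover have "- ((\<alpha> * t powr (\<alpha> - 1) - \<alpha> * 1 - 0) / (\<alpha> * (1 - \<alpha>))) = dphi_scalar \<alpha> t"
      using 3 by (simp add: dphi_scalar_def field_simps)
    ultimately show ?thesis
      using 3 by (simp add: phi_scalar_def[abs_def])
  qed (use assms in \<open>auto intro!: derivative_eq_intros simp: phi_scalar_def[abs_def] dphi_scalar_def field_simps\<close>)
qed

lemma dphi_scalar_has_derivative:
  assumes "0 < t"
  shows "(dphi_scalar \<alpha> has_real_derivative t powr (\<alpha> - 2)) (at t)"
proof -
  consider "\<alpha> = 0" | "\<alpha> = 1" | "\<alpha> \<noteq> 0" "\<alpha> \<noteq> 1" by blast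
  then show ?thesis
  proof cases
    case 1
    have "t powr (-2) = 1 / t^2" using assms by (simp add: powr_minus_divide powr_numeral)
    then show ?thesis using assms 1 unfolding dphi_scalar_def[abs_def]
      by (auto intro!: derivative_eq_intros simp: field_simps power2_eq_square)
  next
    case 2
    have "t powr (-1) = 1 / t" using assms by (simp add: powr_minus_divide)
    then show ?thesis using assms 2 unfolding dphi_scalar_def[abs_def]
      by (auto intro!: derivative_eq_intros simp: field_simps)
  next
    case 3
    have "((\<lambda>t. - (t powr (\<alpha> - 1) - 1) / (1 - \<alpha>)) has_real_derivative
           - ((\<alpha> - 1) * t powr (\<alpha> - 1 - 1) - 0) / (1 - \<alpha>)) (at t)"
      using assms by (intro DERIV_minus DERIV_cdivide DERIV_diff DERIV_const has_real_derivative_powr) auto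
    moreover have "- ((\<alpha> - 1) * t powr (\<alpha> - 1 - 1) - 0) / (1 - \<alpha>) = t powr (\<alpha> - 2)"
      using 3 by (simp add: field_simps)
    ultimately show ?thesis
      using 3 by (simp add: dphi_scalar_def[abs_def])
  qed
qed

lemma dphi_scalar_diff_ge:
  assumes "0 \<le> \<alpha>" "\<alpha> \<le> 1" "0 < b" "b \<le> a"
  shows "a powr (\<alpha> - 2) * (a - b) \<le> dphi_scalar \<alpha> a - dphi_scalar \<alpha> b"
proof (cases "b = a")
  case False
  then have "b < a" using assms by simp
  then obtain z where z: "b < z" "z < a" "dphi_scalar \<alpha> a - dphi_scalar \<alpha> b = (a - b) * z powr (\<alpha> - 2)"
    using MVT2[of b a "dphi_scalar \<alpha>" "\<lambda>t. t powr (\<alpha> - 2)"] dphi_scalar_has_derivative assms by force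
  have "a powr (\<alpha> - 2) \<le> z powr (\<alpha> - 2)"
    by (rule powr_mono2') (use assms z in auto)
  then show ?thesis using z by (simp add: mult.commute mult_left_mono)
qed simp

lemma dphi_scalar_strict_mono:
  assumes "0 \<le> \<alpha>" "\<alpha> \<le> 1" "0 < b" "b < a"
  shows "dphi_scalar \<alpha> b < dphi_scalar \<alpha> a"
proof -
  have "0 < a powr (\<alpha> - 2) * (a - b)" using assms by simp
  then show ?thesis using dphi_scalar_diff_ge[of \<alpha> b a] assms by linarith
qed

lemma dphi_scalar_strongly_monotone:
  assumes "0 \<le> \<alpha>" "\<alpha> \<le> 1" "0 < a" "a \<le> 1" "0 < b" "b \<le> 1"
  shows "(a - b)\<^sup>2 \<le> (dphi_scalar \<alpha> a - dphi_scalar \<alpha> b) * (a - b)"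
proof -
  have ordered: "(a - b)\<^sup>2 \<le> (dphi_scalar \<alpha> a - dphi_scalar \<alpha> b) * (a - b)"
    if "0 < b" "b \<le> a" "a \<le> 1" for a b
  proof -
    have "1 \<le> a powr (\<alpha> - 2)"
      using powr_mono2'[of "\<alpha> - 2" a 1] that assms by simp
    then have "a - b \<le> a powr (\<alpha> - 2) * (a - b)"
      using that mult_right_mono[of 1 "a powr (\<alpha> - 2)" "a - b"] by simp
    then have "a - b \<le> dphi_scalar \<alpha> a - dphi_scalar \<alpha> b"
      using dphi_scalar_diff_ge[of \<alpha> b a] that assms by linarith
    then show ?thesis using that by (simp add: power2_eq_square mult_right_mono)
  qed
  show ?thesis
    using ordered[of b a] ordered[of a b] assms
    by (cases "b \<le> a") (auto simp: power2_commute algebra_simps)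
qed

lemma bregman_scalar_pos:
  assumes "0 \<le> \<alpha>" "\<alpha> \<le> 1" "0 < a" "0 < b" "a \<noteq> b"
  shows "0 < bregman_scalar \<alpha> a b"
proof -
  have mvt: "\<exists>z. min a b < z \<and> z < max a b \<and> phi_scalar \<alpha> a - phi_scalar \<alpha> b = (a - b) * dphi_scalar \<alpha> z"
  proof (cases "b < a")
    case True
    then show ?thesis
      using MVT2[of b a "phi_scalar \<alpha>" "dphi_scalar \<alpha>"] phi_scalar_has_derivative assms by force
  next
    case False
    then have "a < b" using assms by simp
    then obtain z where "a < z" "z < b" "phi_scalar \<alpha> b - phi_scalar \<alpha> a = (b - a) * dphi_scalar \<alpha> z"
      using MVT2[of a b "phi_scalar \<alpha>" "dphi_scalar \<alpha>"] phi_scalar_has_derivative assms by force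
    then show ?thesis by (intro exI[of _ z]) (auto simp: algebra_simps)
  qed
  then obtain z where z: "min a b < z" "z < max a b"
    "phi_scalar \<alpha> a - phi_scalar \<alpha> b = (a - b) * dphi_scalar \<alpha> z" by blast
  have "0 < (a - b) * (dphi_scalar \<alpha> z - dphi_scalar \<alpha> b)"
  proof (cases "b < a")
    case True
    then show ?thesis using dphi_scalar_strict_mono[of \<alpha> b z] assms z by simp
  next
    case False
    then show ?thesis using dphi_scalar_strict_mono[of \<alpha> z b] assms z by (simp add: mult_neg_neg)
  qed
  then show ?thesis using z by (simp add: bregman_scalar_def algebra_simps)
qed

lemma bregman_scalar_nonneg:
  assumes "0 \<le> \<alpha>" "\<alpha> \<le> 1" "0 < a" "0 < b"
  shows "0 \<le> bregman_scalar \<alpha> a b"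
  using bregman_scalar_pos[OF assms] by (cases "a = b") (auto simp: bregman_scalar_def)

lemma bregman_scalar_ge_quadratic:
  assumes "0 \<le> \<alpha>" "\<alpha> \<le> 1" "0 < z" "z \<le> x"
  shows "(x - z)\<^sup>2 * x powr (\<alpha> - 2) / 2 \<le> bregman_scalar \<alpha> z x"
proof (cases "z = x")
  case False
  then have "z < x" using assms by simp
  define p where "p = x powr (\<alpha> - 2)"
  define k where "k = (\<lambda>s. bregman_scalar \<alpha> s x - (x - s)\<^sup>2 * p / 2)"
  have "(k has_real_derivative (dphi_scalar \<alpha> s - dphi_scalar \<alpha> x + (x - s) * p)) (at s)"
    if "z \<le> s" for s
    unfolding k_def bregman_scalar_def using that assms
    by (auto intro!: derivative_eq_intros phi_scalar_has_derivative simp: power2_eq_square field_simps)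
  then obtain c where c: "z < c" "c < x" "k x - k z = (x - z) * (dphi_scalar \<alpha> c - dphi_scalar \<alpha> x + (x - c) * p)"
    using MVT2[OF \<open>z < x\<close>, of k] by force
  have "p * (x - c) \<le> dphi_scalar \<alpha> x - dphi_scalar \<alpha> c"
    unfolding p_def using dphi_scalar_diff_ge[of \<alpha> c x] assms c by simp
  then have "dphi_scalar \<alpha> c - dphi_scalar \<alpha> x + (x - c) * p \<le> 0"
    by (simp add: algebra_simps)
  then have "k x - k z \<le> 0"
    using c by (simp add: mult_nonneg_nonpos)
  moreover have "k x = 0" unfolding k_def bregman_scalar_def by simp
  ultimately show ?thesis unfolding k_def p_def by simp
qed (simp add: bregman_scalar_def)

text \<open>The one-step bound behind the local norms: if the dual coordinate moves down by \<open>u \<ge> 0\<close>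
  from \<open>x\<close> to \<open>z\<close>, then \<open>D(x, z) = u (x - z) - D(z, x)\<close>, and completing the square against the
  curvature \<open>x\<^sup>\<alpha>\<^sup>-\<^sup>2\<close> gives \<open>u\<^sup>2 x\<^sup>2\<^sup>-\<^sup>\<alpha> / 2\<close>.\<close>
lemma bregman_scalar_le_local_norm:
  assumes "0 \<le> \<alpha>" "\<alpha> \<le> 1" "0 < x" "0 < z" "0 \<le> u" "dphi_scalar \<alpha> z = dphi_scalar \<alpha> x - u"
  shows "bregman_scalar \<alpha> x z \<le> u\<^sup>2 * x powr (2 - \<alpha>) / 2"
proof -
  have "z \<le> x"
    using dphi_scalar_strict_mono[of \<alpha> x z] assms by force
  define p where "p = x powr (\<alpha> - 2)"
  have p: "0 < p" using assms p_def by simp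
  have "bregman_scalar \<alpha> x z + bregman_scalar \<alpha> z x = u * (x - z)"
    unfolding bregman_scalar_def assms(6) by (simp add: algebra_simps)
  moreover have "(x - z)\<^sup>2 * p / 2 \<le> bregman_scalar \<alpha> z x"
    using bregman_scalar_ge_quadratic[OF assms(1,2,4) \<open>z \<le> x\<close>] by (simp add: p_def)
  moreover have "u * (x - z) - (x - z)\<^sup>2 * p / 2 = u\<^sup>2 / p / 2 - (u - p * (x - z))\<^sup>2 / p / 2"
    using p by (simp add: field_simps power2_eq_square)
  moreover have "0 \<le> (u - p * (x - z))\<^sup>2 / p / 2" using p by simp
  moreover have "x powr (2 - \<alpha>) = 1 / p"
    using assms by (simp add: p_def powr_minus_divide[symmetric])
  ultimately show ?thesis by simp
qed

section \<open>Bregman divergences and projection onto the truncated simplex\<close>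

lemma mirror_phi_eq_sum: "mirror_phi \<alpha> (x::'k::finite \<Rightarrow> real) = (\<Sum>i\<in>UNIV. phi_scalar \<alpha> (x i))"
  by (auto simp: mirror_phi_def phi_scalar_def sum_negf[symmetric] sum_divide_distrib)

lemma grad_phi_eq: "grad_phi \<alpha> x = (\<lambda>i. dphi_scalar \<alpha> (x i))"
  by (simp add: grad_phi_def dphi_scalar_def fun_eq_iff)

lemma bregman_eq_sum: "bregman \<alpha> (x::'k::finite \<Rightarrow> real) y = (\<Sum>i\<in>UNIV. bregman_scalar \<alpha> (x i) (y i))"
  unfolding bregman_def inner_vec_def mirror_phi_eq_sum grad_phi_eq bregman_scalar_def
  by (simp add: sum_subtractf)

lemma bregman_three_point:
  "bregman \<alpha> (y::'k::finite \<Rightarrow> real) z = bregman \<alpha> y x + bregman \<alpha> x z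
     + inner_vec (\<lambda>i. grad_phi \<alpha> x i - grad_phi \<alpha> z i) (\<lambda>i. y i - x i)"
  unfolding bregman_eq_sum inner_vec_def grad_phi_eq
  by (simp add: sum.distrib[symmetric] bregman_scalar_def algebra_simps)

lemma bregman_nonneg:
  assumes "0 \<le> \<alpha>" "\<alpha> \<le> 1" "\<And>i. 0 < x i" "\<And>i. 0 < y i"
  shows "0 \<le> bregman \<alpha> (x::'k::finite \<Rightarrow> real) y"
  unfolding bregman_eq_sum by (rule sum_nonneg) (use bregman_scalar_nonneg assms in auto)

lemma bregman_pos:
  assumes "0 \<le> \<alpha>" "\<alpha> \<le> 1" "\<And>i. 0 < x i" "\<And>i. 0 < y i" "x \<noteq> y"
  shows "0 < bregman \<alpha> (x::'k::finite \<Rightarrow> real) y"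
proof -
  obtain i where "x i \<noteq> y i" using assms(5) by auto
  then have "0 < bregman_scalar \<alpha> (x i) (y i)" using bregman_scalar_pos assms by auto
  then show ?thesis unfolding bregman_eq_sum
    by (intro sum_pos2[of UNIV i]) (use bregman_scalar_nonneg assms in auto)
qed

lemma trunc_simplex_bounds:
  assumes "x \<in> trunc_simplex \<epsilon>" "0 < \<epsilon>"
  shows "\<epsilon> \<le> x i" "x i \<le> 1" "0 < x i"
proof -
  have lower: "\<epsilon> \<le> x j" for j using assms by (simp add: trunc_simplex_def)
  then show "\<epsilon> \<le> x i" "0 < x i" using assms(2) by (auto intro: less_le_trans)
  have "x i \<le> (\<Sum>j\<in>UNIV. x (j::'a::finite))"
    by (rule member_le_sum) (use lower assms(2) in \<open>auto intro: less_imp_le less_le_trans\<close>)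
  then show "x i \<le> 1" using assms by (simp add: trunc_simplex_def)
qed

lemma uniform_vec_in_trunc_simplex:
  assumes "0 < \<epsilon>" "real CARD('k::finite) * \<epsilon> \<le> 1"
  shows "(uniform_vec :: 'k \<Rightarrow> real) \<in> trunc_simplex \<epsilon>"
  using assms by (simp add: uniform_vec_def trunc_simplex_def field_simps)

lemma convex_comb_in_trunc_simplex:
  assumes "x \<in> trunc_simplex \<epsilon>" "y \<in> trunc_simplex \<epsilon>" "0 \<le> t" "t \<le> 1"
  shows "(\<lambda>j. x j + t * (y j - x j)) \<in> trunc_simplex \<epsilon>"
  unfolding trunc_simplex_def
proof (intro CollectI conjI allI)
  fix j
  have "(1 - t) * \<epsilon> \<le> (1 - t) * x j" "t * \<epsilon> \<le> t * y j"
    using assms by (auto intro!: mult_left_mono simp: trunc_simplex_def)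
  then show "\<epsilon> \<le> x j + t * (y j - x j)" by (simp add: algebra_simps)
next
  show "(\<Sum>j\<in>UNIV. x j + t * (y j - x j)) = 1"
    using assms by (simp add: sum.distrib sum_subtractf sum_distrib_left[symmetric] trunc_simplex_def)
qed

text \<open>The Bregman projection \<open>argmin\<^sub>x D(x, z)\<close> depends on \<open>z\<close> only through \<open>\<nabla>\<phi>(z)\<close>:
  it minimises \<open>\<phi>(x) - \<langle>\<nabla>\<phi>(z), x\<rangle>\<close>. Parametrising it by the dual point \<open>g\<close> makes it
  defined and continuous for every \<open>g\<close>.\<close>

definition dual_objective :: "real \<Rightarrow> ('k::finite \<Rightarrow> real) \<Rightarrow> ('k \<Rightarrow> real) \<Rightarrow> real" where
  "dual_objective \<alpha> g x = mirror_phi \<alpha> x - inner_vec g x"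

definition mirror_proj :: "real \<Rightarrow> real \<Rightarrow> ('k::finite \<Rightarrow> real) \<Rightarrow> ('k \<Rightarrow> real)" where
  "mirror_proj \<alpha> \<epsilon> g = arg_min_on (dual_objective \<alpha> g) (trunc_simplex \<epsilon>)"

lemma dual_objective_eq_sum:
  "dual_objective \<alpha> g x = (\<Sum>j\<in>UNIV. phi_scalar \<alpha> (x j) - g j * (x j :: real))"
  by (simp add: dual_objective_def mirror_phi_eq_sum inner_vec_def sum_subtractf)

lemma proj_step_eq_mirror_proj: "proj_step \<alpha> \<epsilon> z = mirror_proj \<alpha> \<epsilon> (grad_phi \<alpha> (z::'k::finite \<Rightarrow> real))"
proof -
  have "(\<lambda>x. bregman \<alpha> x z) = (\<lambda>x. dual_objective \<alpha> (grad_phi \<alpha> z) x + (inner_vec (grad_phi \<alpha> z) z - mirror_phi \<alpha> z))"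
    by (simp add: fun_eq_iff bregman_def dual_objective_def inner_vec_def sum_subtractf right_diff_distrib)
  then show ?thesis
    by (simp add: proj_step_def mirror_proj_def arg_min_on_def arg_min_def is_arg_min_def)
qed

text \<open>The truncated simplex inside \<open>real ^ 'k\<close>, where bounded closed sets are compact; the
  function space \<open>'k \<Rightarrow> real\<close> is not an instance of \<open>heine_borel\<close>.\<close>
definition trunc_simplex_vec :: "real \<Rightarrow> (real ^ 'k::finite) set" where
  "trunc_simplex_vec \<epsilon> = {v. (\<forall>j. \<epsilon> \<le> v$j \<and> v$j \<le> 1) \<and> (\<Sum>j\<in>UNIV. v$j) = 1}"

lemma compact_trunc_simplex_vec: "compact (trunc_simplex_vec \<epsilon> :: (real ^ 'k::finite) set)"
proof -
  have norm_le: "norm v \<le> real CARD('k) * (1 + \<bar>\<epsilon>\<bar>)" if "v \<in> trunc_simplex_vec \<epsilon>" for v :: "real^'k"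
  proof -
    have "norm v \<le> (\<Sum>i\<in>UNIV. \<bar>v$i\<bar>)" by (rule norm_le_l1_cart)
    also have "\<dots> \<le> (\<Sum>i\<in>(UNIV::'k set). 1 + \<bar>\<epsilon>\<bar>)"
    proof (rule sum_mono)
      fix i
      have "\<epsilon> \<le> v$i" "v$i \<le> 1" using that by (auto simp: trunc_simplex_vec_def)
      then show "\<bar>v$i\<bar> \<le> 1 + \<bar>\<epsilon>\<bar>" by arith
    qed
    finally show ?thesis by simp
  qed
  have coord: "continuous_on UNIV (\<lambda>v::real^'k. v$j)" for j
    by (intro linear_continuous_on bounded_linear_vec_nth)
  have "trunc_simplex_vec \<epsilon> = (\<Inter>j. {v::real^'k. \<epsilon> \<le> v$j}) \<inter> (\<Inter>j. {v. v$j \<le> 1}) \<inter> {v. (\<Sum>j\<in>UNIV. v$j) = 1}"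
    unfolding trunc_simplex_vec_def by auto
  also have "closed \<dots>"
    by (intro closed_Int closed_INT ballI closed_Collect_le[OF continuous_on_const coord]
        closed_Collect_le[OF coord continuous_on_const] closed_Collect_eq[OF continuous_on_sum continuous_on_const]
        coord)
  finally show ?thesis
    using boundedI[OF norm_le] by (simp add: compact_eq_bounded_closed)
qed

lemma vec_lambda_in_trunc_simplex_vec:
  assumes "x \<in> trunc_simplex \<epsilon>" "0 < \<epsilon>"
  shows "(\<chi> j. x j) \<in> trunc_simplex_vec \<epsilon>"
  using trunc_simplex_bounds[OF assms] assms(1) by (simp add: trunc_simplex_def trunc_simplex_vec_def)

lemma dual_objective_has_min:
  assumes "0 < \<epsilon>" "real CARD('k::finite) * \<epsilon> \<le> 1"
  shows "\<exists>x\<in>trunc_simplex \<epsilon>. \<forall>y\<in>trunc_simplex \<epsilon>. dual_objective \<alpha> g x \<le> dual_objective \<alpha> (g::'k \<Rightarrow> real) y"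
proof -
  define F where "F = (\<lambda>v::real^'k. dual_objective \<alpha> g (\<lambda>j. v$j))"
  have coord: "continuous_on (trunc_simplex_vec \<epsilon>) (\<lambda>v::real^'k. v$j)" for j
    by (intro linear_continuous_on bounded_linear_vec_nth)
  have phi: "continuous_on (trunc_simplex_vec \<epsilon>) (\<lambda>v::real^'k. phi_scalar \<alpha> (v$j))" for j
  proof (rule continuous_on_compose2[of "{0<..}" "phi_scalar \<alpha>"])
    show "continuous_on {0<..} (phi_scalar \<alpha>)"
      by (rule continuous_at_imp_continuous_on) (auto intro: DERIV_isCont phi_scalar_has_derivative)
    show "(\<lambda>v. v$j) ` trunc_simplex_vec \<epsilon> \<subseteq> {0<..}"
      using assms(1) by (auto simp: trunc_simplex_vec_def intro: less_le_trans)
  qed (rule coord)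
  have cont: "continuous_on (trunc_simplex_vec \<epsilon>) F"
    unfolding F_def dual_objective_eq_sum
    by (intro continuous_on_sum continuous_on_diff continuous_on_mult continuous_on_const coord phi)
  have nonempty: "trunc_simplex_vec \<epsilon> \<noteq> ({} :: (real^'k) set)"
    using vec_lambda_in_trunc_simplex_vec[OF uniform_vec_in_trunc_simplex[OF assms] assms(1)] by auto
  obtain v where v: "v \<in> trunc_simplex_vec \<epsilon>" "\<forall>w\<in>trunc_simplex_vec \<epsilon>. F v \<le> F w"
    using continuous_attains_inf[OF compact_trunc_simplex_vec nonempty cont] by blast
  have "(\<lambda>j. v$j) \<in> trunc_simplex \<epsilon>" using v(1) by (simp add: trunc_simplex_vec_def trunc_simplex_def)
  moreover have "F v \<le> dual_objective \<alpha> g y" if "y \<in> trunc_simplex \<epsilon>" for y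
    using bspec[OF v(2) vec_lambda_in_trunc_simplex_vec[OF that assms(1)]] by (simp add: F_def vec_lambda_inverse)
  ultimately show ?thesis unfolding F_def by blast
qed

lemma
  assumes "0 < \<epsilon>" "real CARD('k::finite) * \<epsilon> \<le> 1"
  shows mirror_proj_in_trunc_simplex: "mirror_proj \<alpha> \<epsilon> g \<in> trunc_simplex \<epsilon>"
    and mirror_proj_minimal:
      "y \<in> trunc_simplex \<epsilon> \<Longrightarrow> dual_objective \<alpha> g (mirror_proj \<alpha> \<epsilon> g) \<le> dual_objective \<alpha> (g::'k \<Rightarrow> real) y"
proof -
  have "\<exists>x. is_arg_min (dual_objective \<alpha> g) (\<lambda>x. x \<in> trunc_simplex \<epsilon>) x"
    using dual_objective_has_min[OF assms, of \<alpha> g] by (auto simp: is_arg_min_def not_less)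
  then have "is_arg_min (dual_objective \<alpha> g) (\<lambda>x. x \<in> trunc_simplex \<epsilon>) (mirror_proj \<alpha> \<epsilon> g)"
    unfolding mirror_proj_def arg_min_on_def arg_min_def by (rule someI_ex)
  then show "mirror_proj \<alpha> \<epsilon> g \<in> trunc_simplex \<epsilon>"
    and "y \<in> trunc_simplex \<epsilon> \<Longrightarrow> dual_objective \<alpha> g (mirror_proj \<alpha> \<epsilon> g) \<le> dual_objective \<alpha> g y"
    by (auto simp: is_arg_min_def not_less)
qed

lemma dual_objective_diff_le:
  assumes "0 \<le> \<alpha>" "\<alpha> \<le> 1" "\<And>j. 0 < x j" "\<And>j. 0 < x j + d j"
  shows "dual_objective \<alpha> g (\<lambda>j. x j + d j) - dual_objective \<alpha> g x
    \<le> (\<Sum>j\<in>UNIV. (dphi_scalar \<alpha> (x j + d j) - g j) * d (j::'k::finite))"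
  unfolding dual_objective_eq_sum sum_subtractf[symmetric]
proof (rule sum_mono)
  fix j
  have "0 \<le> bregman_scalar \<alpha> (x j) (x j + d j)"
    using bregman_scalar_nonneg assms by blast
  then show "phi_scalar \<alpha> (x j + d j) - g j * (x j + d j) - (phi_scalar \<alpha> (x j) - g j * x j)
      \<le> (dphi_scalar \<alpha> (x j + d j) - g j) * d j"
    by (simp add: bregman_scalar_def algebra_simps)
qed

lemma mirror_proj_variational_ineq:
  assumes a: "0 \<le> \<alpha>" "\<alpha> \<le> 1" and e: "0 < \<epsilon>" "real CARD('k::finite) * \<epsilon> \<le> 1"
    and y: "y \<in> trunc_simplex \<epsilon>"
  shows "0 \<le> (\<Sum>j\<in>UNIV. (dphi_scalar \<alpha> (mirror_proj \<alpha> \<epsilon> g j) - g j) * (y j - mirror_proj \<alpha> \<epsilon> (g::'k \<Rightarrow> real) j))"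
proof -
  define x where "x = mirror_proj \<alpha> \<epsilon> g"
  define d where "d = (\<lambda>j. y j - x j)"
  define D where "D = (\<lambda>t. \<Sum>j\<in>UNIV. (dphi_scalar \<alpha> (x j + t * d j) - g j) * d j)"
  have x: "x \<in> trunc_simplex \<epsilon>" unfolding x_def by (rule mirror_proj_in_trunc_simplex[OF e])
  have xpos: "0 < x j" for j using trunc_simplex_bounds[OF x e(1)] by simp
  have "0 \<le> D t" if t: "0 < t" "t < 1" for t
  proof -
    have xt: "(\<lambda>j. x j + t * d j) \<in> trunc_simplex \<epsilon>"
      unfolding d_def by (rule convex_comb_in_trunc_simplex[OF x y]) (use t in auto)
    have "0 \<le> dual_objective \<alpha> g (\<lambda>j. x j + t * d j) - dual_objective \<alpha> g x"
      using mirror_proj_minimal[OF e xt] by (simp add: x_def)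
    also have "\<dots> \<le> t * D t"
      using dual_objective_diff_le[OF a xpos, where d = "\<lambda>j. t * d j" and g = g] trunc_simplex_bounds(3)[OF xt e(1)]
      by (simp add: D_def sum_distrib_left algebra_simps)
    finally show ?thesis using t by (simp add: zero_le_mult_iff)
  qed
  then have "eventually (\<lambda>t. 0 \<le> D t) (at_right 0)"
    unfolding eventually_at_right_field by (intro exI[of _ 1]) simp
  moreover have "isCont (\<lambda>t. dphi_scalar \<alpha> (x j + t * d j)) 0" for j
  proof -
    have "isCont (dphi_scalar \<alpha>) ((\<lambda>t. x j + t * d j) 0)"
      using DERIV_isCont[OF dphi_scalar_has_derivative[OF xpos[of j]]] by simp
    then show ?thesis by (rule isCont_o2[rotated]) (intro continuous_intros)
  qed
  then have "isCont D 0"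
    unfolding D_def by (intro continuous_sum continuous_mult continuous_diff continuous_const)
  then have "(D \<longlongrightarrow> D 0) (at_right 0)"
    unfolding isCont_def by (rule tendsto_within_subset) simp
  ultimately have "0 \<le> D 0"
    by (intro tendsto_lowerbound[of D]) (auto simp del: eventually_at_right_field)
  then show ?thesis by (simp add: D_def d_def x_def)
qed

text \<open>The variational inequalities at two projections, added up, meet the strong monotonicity
  of \<open>\<phi>'\<close> on \<open>(0, 1]\<close>. The resulting square-root modulus of continuity is all that the
  measurability of the iterates needs.\<close>
lemma mirror_proj_coord_diff_sq_le:
  assumes a: "0 \<le> \<alpha>" "\<alpha> \<le> 1" and e: "0 < \<epsilon>" "real CARD('k::finite) * \<epsilon> \<le> 1"
  shows "(mirror_proj \<alpha> \<epsilon> g1 i - mirror_proj \<alpha> \<epsilon> g2 i)\<^sup>2 \<le> (\<Sum>j\<in>UNIV. \<bar>g1 j - (g2::'k \<Rightarrow> real) j\<bar>)"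
proof -
  define x1 where "x1 = mirror_proj \<alpha> \<epsilon> g1"
  define x2 where "x2 = mirror_proj \<alpha> \<epsilon> g2"
  have x1: "x1 \<in> trunc_simplex \<epsilon>" and x2: "x2 \<in> trunc_simplex \<epsilon>"
    unfolding x1_def x2_def by (rule mirror_proj_in_trunc_simplex[OF e])+
  have bounds: "0 < x1 j" "x1 j \<le> 1" "0 < x2 j" "x2 j \<le> 1" for j
    using trunc_simplex_bounds[OF x1 e(1)] trunc_simplex_bounds[OF x2 e(1)] by auto
  have "0 \<le> (\<Sum>j\<in>UNIV. (dphi_scalar \<alpha> (x1 j) - g1 j) * (x2 j - x1 j))
      + (\<Sum>j\<in>UNIV. (dphi_scalar \<alpha> (x2 j) - g2 j) * (x1 j - x2 j))"
    using mirror_proj_variational_ineq[OF a e x2, of g1] mirror_proj_variational_ineq[OF a e x1, of g2]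
    by (simp add: x1_def x2_def)
  also have "\<dots> = (\<Sum>j\<in>UNIV. (g1 j - g2 j) * (x1 j - x2 j))
      - (\<Sum>j\<in>UNIV. (dphi_scalar \<alpha> (x1 j) - dphi_scalar \<alpha> (x2 j)) * (x1 j - x2 j))"
    by (simp add: sum.distrib[symmetric] sum_subtractf[symmetric] algebra_simps)
  finally have monotone: "(\<Sum>j\<in>UNIV. (dphi_scalar \<alpha> (x1 j) - dphi_scalar \<alpha> (x2 j)) * (x1 j - x2 j))
      \<le> (\<Sum>j\<in>UNIV. (g1 j - g2 j) * (x1 j - x2 j))"
    by simp
  have "(x1 i - x2 i)\<^sup>2 \<le> (\<Sum>j\<in>UNIV. (x1 j - x2 j)\<^sup>2)"
    by (rule member_le_sum) simp_all
  also have "\<dots> \<le> (\<Sum>j\<in>UNIV. (dphi_scalar \<alpha> (x1 j) - dphi_scalar \<alpha> (x2 j)) * (x1 j - x2 j))"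
    by (rule sum_mono) (rule dphi_scalar_strongly_monotone[OF a bounds])
  also have "\<dots> \<le> (\<Sum>j\<in>UNIV. (g1 j - g2 j) * (x1 j - x2 j))"
    by (rule monotone)
  also have "\<dots> \<le> (\<Sum>j\<in>UNIV. \<bar>g1 j - g2 j\<bar>)"
  proof (rule sum_mono)
    fix j
    have "\<bar>x1 j - x2 j\<bar> \<le> 1" using bounds[of j] by simp
    then have "\<bar>g1 j - g2 j\<bar> * \<bar>x1 j - x2 j\<bar> \<le> \<bar>g1 j - g2 j\<bar>"
      using mult_left_mono[of "\<bar>x1 j - x2 j\<bar>" 1 "\<bar>g1 j - g2 j\<bar>"] by simp
    moreover have "(g1 j - g2 j) * (x1 j - x2 j) \<le> \<bar>g1 j - g2 j\<bar> * \<bar>x1 j - x2 j\<bar>"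
      by (simp add: abs_mult[symmetric])
    ultimately show "(g1 j - g2 j) * (x1 j - x2 j) \<le> \<bar>g1 j - g2 j\<bar>" by simp
  qed
  finally show ?thesis by (simp add: x1_def x2_def)
qed

lemma continuous_on_mirror_proj:
  assumes a: "0 \<le> \<alpha>" "\<alpha> \<le> 1" and e: "0 < \<epsilon>" "real CARD('k::finite) * \<epsilon> \<le> 1"
  shows "continuous_on UNIV (mirror_proj \<alpha> \<epsilon> :: ('k \<Rightarrow> real) \<Rightarrow> ('k \<Rightarrow> real))"
proof (rule continuous_on_coordinatewise_then_product, rule continuous_at_imp_continuous_on, rule ballI)
  fix i :: 'k and g0 :: "'k \<Rightarrow> real"
  have coord: "((\<lambda>g::'k \<Rightarrow> real. g j) \<longlongrightarrow> g0 j) (at g0)" for j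
    using continuous_on_eq_continuous_at[OF open_UNIV, of "\<lambda>g::'k \<Rightarrow> real. g j"]
      continuous_on_product_coordinates[of j] by (simp add: isCont_def)
  have "((\<lambda>g. sqrt (\<Sum>j\<in>UNIV. \<bar>g j - g0 j\<bar>)) \<longlongrightarrow> sqrt (\<Sum>j\<in>UNIV. \<bar>g0 j - g0 j\<bar>)) (at g0)"
    by (intro tendsto_intros coord)
  then have bound_lim: "((\<lambda>g. sqrt (\<Sum>j\<in>UNIV. \<bar>g j - g0 j\<bar>)) \<longlongrightarrow> 0) (at g0)"
    by simp
  have "norm (mirror_proj \<alpha> \<epsilon> g i - mirror_proj \<alpha> \<epsilon> g0 i) \<le> sqrt (\<Sum>j\<in>UNIV. \<bar>g j - g0 j\<bar>)" for g
    using real_sqrt_le_mono[OF mirror_proj_coord_diff_sq_le[OF a e, of g i g0]] by simp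
  then have "((\<lambda>g. mirror_proj \<alpha> \<epsilon> g i - mirror_proj \<alpha> \<epsilon> g0 i) \<longlongrightarrow> 0) (at g0)"
    by (intro Lim_null_comparison[OF always_eventually bound_lim] allI)
  then show "isCont (\<lambda>g. mirror_proj \<alpha> \<epsilon> g i) g0"
    unfolding isCont_def by (rule LIM_zero_cancel)
qed

section \<open>The mirror-descent step\<close>

definition step_objective :: "real \<Rightarrow> real \<Rightarrow> ('k::finite \<Rightarrow> real) \<Rightarrow> ('k \<Rightarrow> real) \<Rightarrow> ('k \<Rightarrow> real) \<Rightarrow> real" where
  "step_objective \<alpha> \<eta> lt x w = \<eta> * inner_vec lt w + bregman \<alpha> w x"

text \<open>For \<open>\<alpha> < 1\<close> the dual point \<open>\<nabla>\<phi>(x) - \<eta> lt\<close> lies in the range of \<open>\<nabla>\<phi>\<close>, which is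
  \<open>(-\<infinity>, 1/(1-\<alpha>))\<close> in each coordinate, only under this condition.\<close>
definition step_exists :: "real \<Rightarrow> real \<Rightarrow> ('k::finite \<Rightarrow> real) \<Rightarrow> ('k \<Rightarrow> real) \<Rightarrow> bool" where
  "step_exists \<alpha> \<eta> lt x \<longleftrightarrow> \<alpha> = 1 \<or> (\<forall>j. 0 < x j powr (\<alpha> - 1) + (1 - \<alpha>) * \<eta> * lt j)"

definition step_point :: "real \<Rightarrow> real \<Rightarrow> ('k::finite \<Rightarrow> real) \<Rightarrow> ('k \<Rightarrow> real) \<Rightarrow> ('k \<Rightarrow> real)" where
  "step_point \<alpha> \<eta> lt x = (\<lambda>j. if \<alpha> = 1 then x j * exp (- (\<eta> * lt j))
     else (x j powr (\<alpha> - 1) + (1 - \<alpha>) * \<eta> * lt j) powr (1 / (\<alpha> - 1)))"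

text \<open>The value \<open>arg_min_on\<close> returns when there is no minimiser.\<close>
definition arg_min_junk :: "'k::finite \<Rightarrow> real" where
  "arg_min_junk = (SOME w. False)"

definition step_grad :: "real \<Rightarrow> real \<Rightarrow> ('k::finite \<Rightarrow> real) \<Rightarrow> ('k \<Rightarrow> real) \<Rightarrow> ('k \<Rightarrow> real)" where
  "step_grad \<alpha> \<eta> lt x = (if step_exists \<alpha> \<eta> lt x then (\<lambda>j. grad_phi \<alpha> x j - \<eta> * lt j)
     else grad_phi \<alpha> arg_min_junk)"

lemma step_objective_eq_sum:
  "step_objective \<alpha> \<eta> lt x w = (\<Sum>j\<in>UNIV. \<eta> * lt j * w j + bregman_scalar \<alpha> (w j) (x (j::'k::finite)))"
  by (simp add: step_objective_def inner_vec_def bregman_eq_sum sum.distrib sum_distrib_left mult.assoc)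

lemma step_objective_shift:
  assumes "grad_phi \<alpha> w' = (\<lambda>j. grad_phi \<alpha> x j - \<eta> * lt j)"
  shows "step_objective \<alpha> \<eta> lt x w = step_objective \<alpha> \<eta> lt x w' + bregman \<alpha> w (w'::'k::finite \<Rightarrow> real)"
proof -
  have "inner_vec (\<lambda>i. grad_phi \<alpha> w' i - grad_phi \<alpha> x i) (\<lambda>i. w i - w' i)
      = \<eta> * inner_vec lt w' - \<eta> * inner_vec lt w"
    unfolding assms inner_vec_def by (simp add: sum_distrib_left sum_subtractf[symmetric] algebra_simps)
  then show ?thesis
    using bregman_three_point[of \<alpha> w x w'] by (simp add: step_objective_def)
qed

lemma
  assumes a: "0 \<le> \<alpha>" "\<alpha> \<le> 1" and x: "\<And>j. 0 < x j" and ex: "step_exists \<alpha> \<eta> lt x"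
  shows step_point_pos: "0 < step_point \<alpha> \<eta> lt x j"
    and grad_phi_step_point: "grad_phi \<alpha> (step_point \<alpha> \<eta> lt x) = (\<lambda>j. grad_phi \<alpha> x j - \<eta> * lt j)"
proof -
  have "\<alpha> \<noteq> 1 \<Longrightarrow> 0 < x j powr (\<alpha> - 1) + (1 - \<alpha>) * \<eta> * lt j"
    using ex by (simp add: step_exists_def)
  then show "0 < step_point \<alpha> \<eta> lt x j"
    using x[of j] by (cases "\<alpha> = 1") (simp_all add: step_point_def)
  show "grad_phi \<alpha> (step_point \<alpha> \<eta> lt x) = (\<lambda>j. grad_phi \<alpha> x j - \<eta> * lt j)"
  proof (rule ext, cases "\<alpha> = 1")
    case True
    then show "grad_phi \<alpha> (step_point \<alpha> \<eta> lt x) j = grad_phi \<alpha> x j - \<eta> * lt j" for j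
      using x[of j] by (simp add: grad_phi_def step_point_def ln_mult)
  next
    case False
    fix j
    define q where "q = x j powr (\<alpha> - 1) + (1 - \<alpha>) * \<eta> * lt j"
    have "0 < q" using ex False by (simp add: step_exists_def q_def)
    moreover have "\<alpha> < 1" using a False by simp
    ultimately have "dphi_scalar \<alpha> (q powr (1 / (\<alpha> - 1))) = (1 - q) / (1 - \<alpha>)"
      using dphi_scalar_less_1[OF a(1)] by (simp add: powr_powr)
    also have "\<dots> = dphi_scalar \<alpha> (x j) - \<eta> * lt j"
      using \<open>\<alpha> < 1\<close> dphi_scalar_less_1[OF a(1) _ x] by (simp add: q_def field_simps)
    finally show "grad_phi \<alpha> (step_point \<alpha> \<eta> lt x) j = grad_phi \<alpha> x j - \<eta> * lt j"
      using False by (simp add: grad_phi_eq step_point_def q_def)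
  qed
qed

lemma arg_min_step_objective:
  assumes a: "0 \<le> \<alpha>" "\<alpha> \<le> 1" and x: "\<And>j. 0 < x j" and ex: "step_exists \<alpha> \<eta> lt x"
  shows "arg_min_on (step_objective \<alpha> \<eta> lt x) pos_orthant = (step_point \<alpha> \<eta> lt x :: 'k::finite \<Rightarrow> real)"
proof -
  let ?w = "step_point \<alpha> \<eta> lt x"
  have w: "\<And>j. 0 < ?w j"
    by (rule step_point_pos[OF a x ex])
  have shift: "step_objective \<alpha> \<eta> lt x v = step_objective \<alpha> \<eta> lt x ?w + bregman \<alpha> v ?w" for v
    by (rule step_objective_shift[OF grad_phi_step_point[OF a x ex]])
  have "is_arg_min (step_objective \<alpha> \<eta> lt x) (\<lambda>v. v \<in> pos_orthant) v \<longleftrightarrow> v = ?w" for v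
  proof
    assume min: "is_arg_min (step_objective \<alpha> \<eta> lt x) (\<lambda>v. v \<in> pos_orthant) v"
    then have v: "\<And>j. 0 < v j" by (simp add: is_arg_min_def pos_orthant_def)
    have "?w \<in> pos_orthant" using w by (simp add: pos_orthant_def)
    then have "\<not> step_objective \<alpha> \<eta> lt x ?w < step_objective \<alpha> \<eta> lt x v"
      using min unfolding is_arg_min_def by blast
    then have "\<not> 0 < bregman \<alpha> v ?w" using shift[of v] by simp
    then show "v = ?w" using bregman_pos[OF a, of v ?w] v w by auto
  next
    assume "v = ?w"
    moreover have "step_objective \<alpha> \<eta> lt x ?w \<le> step_objective \<alpha> \<eta> lt x u" if "u \<in> pos_orthant" for u
      using shift[of u] bregman_nonneg[OF a _ w, of u] that by (simp add: pos_orthant_def)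
    moreover have "?w \<in> pos_orthant" using w by (simp add: pos_orthant_def)
    ultimately show "is_arg_min (step_objective \<alpha> \<eta> lt x) (\<lambda>v. v \<in> pos_orthant) v"
      unfolding is_arg_min_def by (auto simp: not_less)
  qed
  then show ?thesis by (simp add: arg_min_on_def arg_min_def)
qed

text \<open>If \<open>\<nabla>\<phi>(x) - \<eta> lt\<close> leaves the range of \<open>\<nabla>\<phi>\<close> in coordinate \<open>c\<close>, the objective keeps
  decreasing as \<open>w\<^sub>c\<close> grows.\<close>
lemma arg_min_step_objective_junk:
  assumes a: "0 \<le> \<alpha>" "\<alpha> < 1" and x: "0 < x c"
    and out: "x c powr (\<alpha> - 1) + (1 - \<alpha>) * \<eta> * lt c \<le> 0"
  shows "arg_min_on (step_objective \<alpha> \<eta> lt x) pos_orthant = (arg_min_junk :: 'k::finite \<Rightarrow> real)"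
proof -
  have "\<not> is_arg_min (step_objective \<alpha> \<eta> lt x) (\<lambda>w. w \<in> pos_orthant) w" for w
  proof
    assume min: "is_arg_min (step_objective \<alpha> \<eta> lt x) (\<lambda>w. w \<in> pos_orthant) w"
    then have w: "\<And>j. 0 < w j" by (auto simp: is_arg_min_def pos_orthant_def)
    define F where "F = (\<lambda>s. \<eta> * lt c * s + bregman_scalar \<alpha> s (x c))"
    obtain z where z: "w c < z" "phi_scalar \<alpha> (w c + 1) - phi_scalar \<alpha> (w c) = dphi_scalar \<alpha> z"
      using MVT2[of "w c" "w c + 1" "phi_scalar \<alpha>" "dphi_scalar \<alpha>"] phi_scalar_has_derivative w[of c] by force
    have z_pos: "0 < z" using z w[of c] by simp
    have "F (w c + 1) - F (w c) = \<eta> * lt c + dphi_scalar \<alpha> z - dphi_scalar \<alpha> (x c)"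
      using z by (simp add: F_def bregman_scalar_def algebra_simps)
    also have "\<dots> = (x c powr (\<alpha> - 1) + (1 - \<alpha>) * \<eta> * lt c - z powr (\<alpha> - 1)) / (1 - \<alpha>)"
    proof -
      have "D \<noteq> 0 \<Longrightarrow> e + (1 - Z) / D - (1 - X) / D = (X + D * e - Z) / D" for e X Z D :: real
        by (simp add: field_simps)
      from this[of "1 - \<alpha>"] show ?thesis using a by (simp add: dphi_scalar_less_1 z_pos x mult.assoc)
    qed
    also have "\<dots> < 0"
    proof (rule divide_neg_pos)
      show "x c powr (\<alpha> - 1) + (1 - \<alpha>) * \<eta> * lt c - z powr (\<alpha> - 1) < 0"
        using out powr_gt_zero[of z "\<alpha> - 1"] z_pos by linarith
    qed (use a in simp)
    finally have "F (w c + 1) < F (w c)" by simp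
    moreover have "step_objective \<alpha> \<eta> lt x (w(c := w c + 1)) - step_objective \<alpha> \<eta> lt x w = F (w c + 1) - F (w c)"
      unfolding step_objective_eq_sum F_def sum_subtractf[symmetric]
      by (subst sum.remove[of _ c]) (simp_all add: sum.neutral)
    moreover have "w(c := w c + 1) \<in> pos_orthant"
      using w by (simp add: pos_orthant_def add_pos_pos)
    ultimately show False using min by (auto simp: is_arg_min_def)
  qed
  then show ?thesis by (simp add: arg_min_on_def arg_min_def arg_min_junk_def)
qed

lemma grad_phi_arg_min_step_objective:
  assumes a: "0 \<le> \<alpha>" "\<alpha> \<le> 1" and x: "\<And>j. 0 < x j"
  shows "grad_phi \<alpha> (arg_min_on (step_objective \<alpha> \<eta> lt x) pos_orthant) = step_grad \<alpha> \<eta> lt (x::'k::finite \<Rightarrow> real)"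
proof (cases "step_exists \<alpha> \<eta> lt x")
  case True
  then show ?thesis
    by (simp add: arg_min_step_objective[OF a x] grad_phi_step_point[OF a x] step_grad_def)
next
  case False
  then obtain c where "\<alpha> < 1" "x c powr (\<alpha> - 1) + (1 - \<alpha>) * \<eta> * lt c \<le> 0"
    using a by (auto simp: step_exists_def not_less)
  then show ?thesis
    using False by (simp add: arg_min_step_objective_junk[OF a(1) _ x] step_grad_def)
qed

lemma step_exists_nonneg:
  assumes "0 \<le> \<alpha>" "\<alpha> \<le> 1" "0 \<le> \<eta>" "\<And>j. 0 < x j" "\<And>j. 0 \<le> lt j"
  shows "step_exists \<alpha> \<eta> lt x"
proof -
  have "0 < x j powr (\<alpha> - 1) + (1 - \<alpha>) * \<eta> * lt j" for j
    using assms by (intro add_pos_nonneg) (simp_all add: less_imp_neq[symmetric])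
  then show ?thesis by (simp add: step_exists_def)
qed

lemma bregman_mirror_proj_le:
  assumes a: "0 \<le> \<alpha>" "\<alpha> \<le> 1" and e: "0 < \<epsilon>" "real CARD('k::finite) * \<epsilon> \<le> 1"
    and y: "y \<in> trunc_simplex \<epsilon>" and z: "\<And>j. 0 < z j"
  shows "bregman \<alpha> y (mirror_proj \<alpha> \<epsilon> (grad_phi \<alpha> z)) \<le> bregman \<alpha> y (z :: 'k \<Rightarrow> real)"
proof -
  define x where "x = mirror_proj \<alpha> \<epsilon> (grad_phi \<alpha> z)"
  have x: "\<And>j. 0 < x j"
    using trunc_simplex_bounds[OF mirror_proj_in_trunc_simplex[OF e] e(1)] by (simp add: x_def)
  have "0 \<le> inner_vec (\<lambda>i. grad_phi \<alpha> x i - grad_phi \<alpha> z i) (\<lambda>i. y i - x i)"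
    using mirror_proj_variational_ineq[OF a e y, of "grad_phi \<alpha> z"]
    by (simp add: x_def inner_vec_def grad_phi_eq)
  moreover have "0 \<le> bregman \<alpha> x z" by (rule bregman_nonneg[OF a x z])
  ultimately show ?thesis
    using bregman_three_point[of \<alpha> y z x] by (simp add: x_def)
qed

lemma bregman_step_point_le:
  assumes a: "0 \<le> \<alpha>" "\<alpha> \<le> 1" and x: "\<And>j. 0 < x j" and eta: "0 \<le> \<eta>" and lt: "\<And>j. 0 \<le> lt j"
  shows "bregman \<alpha> x (step_point \<alpha> \<eta> lt x) \<le> \<eta>\<^sup>2 / 2 * local_norm_sq \<alpha> x (lt :: 'k::finite \<Rightarrow> real)"
proof -
  have ex: "step_exists \<alpha> \<eta> lt x" by (rule step_exists_nonneg[OF a eta x lt])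
  have "bregman_scalar \<alpha> (x j) (step_point \<alpha> \<eta> lt x j) \<le> (\<eta> * lt j)\<^sup>2 * x j powr (2 - \<alpha>) / 2" for j
  proof (rule bregman_scalar_le_local_norm[OF a x step_point_pos[OF a x ex]])
    show "0 \<le> \<eta> * lt j" using eta lt by simp
    show "dphi_scalar \<alpha> (step_point \<alpha> \<eta> lt x j) = dphi_scalar \<alpha> (x j) - \<eta> * lt j"
      using grad_phi_step_point[OF a x ex] by (simp add: grad_phi_eq fun_eq_iff)
  qed
  then have "bregman \<alpha> x (step_point \<alpha> \<eta> lt x) \<le> (\<Sum>j\<in>UNIV. (\<eta> * lt j)\<^sup>2 * x j powr (2 - \<alpha>) / 2)"
    unfolding bregman_eq_sum by (rule sum_mono)
  also have "\<dots> = \<eta>\<^sup>2 / 2 * local_norm_sq \<alpha> x lt"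
    by (simp add: local_norm_sq_def sum_distrib_left power_mult_distrib algebra_simps)
  finally show ?thesis .
qed

text \<open>Three-point identity plus Pythagorean inequality. Nonnegativity of \<open>lt\<close> is what guarantees
  that the unconstrained step exists.\<close>
lemma mirror_descent_step_le:
  assumes a: "0 \<le> \<alpha>" "\<alpha> \<le> 1" and e: "0 < \<epsilon>" "real CARD('k::finite) * \<epsilon> \<le> 1"
    and x: "x \<in> trunc_simplex \<epsilon>" and y: "y \<in> trunc_simplex \<epsilon>"
    and eta: "0 \<le> \<eta>" and lt: "\<And>j. 0 \<le> lt j"
  shows "\<eta> * inner_vec lt (\<lambda>i. x i - y i)
    \<le> bregman \<alpha> y x - bregman \<alpha> y (mirror_proj \<alpha> \<epsilon> (step_grad \<alpha> \<eta> lt x))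
      + \<eta>\<^sup>2 / 2 * local_norm_sq \<alpha> x (lt :: 'k \<Rightarrow> real)"
proof -
  have xpos: "\<And>j. 0 < x j" using trunc_simplex_bounds[OF x e(1)] by blast
  have ex: "step_exists \<alpha> \<eta> lt x" by (rule step_exists_nonneg[OF a eta xpos lt])
  define z where "z = step_point \<alpha> \<eta> lt x"
  have z: "\<And>j. 0 < z j" unfolding z_def by (rule step_point_pos[OF a xpos ex])
  have grad_z: "grad_phi \<alpha> z = (\<lambda>j. grad_phi \<alpha> x j - \<eta> * lt j)"
    unfolding z_def by (rule grad_phi_step_point[OF a xpos ex])
  have "step_grad \<alpha> \<eta> lt x = grad_phi \<alpha> z" using ex grad_z by (simp add: step_grad_def)
  then have "bregman \<alpha> y (mirror_proj \<alpha> \<epsilon> (step_grad \<alpha> \<eta> lt x)) \<le> bregman \<alpha> y z"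
    using bregman_mirror_proj_le[OF a e y z] by simp
  moreover have "inner_vec (\<lambda>i. grad_phi \<alpha> x i - grad_phi \<alpha> z i) (\<lambda>i. y i - x i)
      = - (\<eta> * inner_vec lt (\<lambda>i. x i - y i))"
    unfolding inner_vec_def grad_z sum_distrib_left sum_negf[symmetric]
    by (rule sum.cong) (simp_all add: algebra_simps)
  then have "bregman \<alpha> y z = bregman \<alpha> y x + bregman \<alpha> x z - \<eta> * inner_vec lt (\<lambda>i. x i - y i)"
    using bregman_three_point[of \<alpha> y z x] by simp
  moreover have "bregman \<alpha> x z \<le> \<eta>\<^sup>2 / 2 * local_norm_sq \<alpha> x lt"
    unfolding z_def by (rule bregman_step_point_le[OF a xpos eta lt])
  ultimately show ?thesis by linarith
qed

lemma local_norm_sq_add_le: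
  "local_norm_sq \<alpha> x (\<lambda>j. u j + c * v j) / 2 \<le> local_norm_sq \<alpha> x u + c\<^sup>2 * local_norm_sq \<alpha> (x::'k::finite \<Rightarrow> real) v"
proof -
  have "(u j + c * v j)\<^sup>2 * x j powr (2 - \<alpha>) / 2 \<le> (u j)\<^sup>2 * x j powr (2 - \<alpha>) + c\<^sup>2 * ((v j)\<^sup>2 * x j powr (2 - \<alpha>))" for j
  proof -
    have "(u j + c * v j)\<^sup>2 / 2 \<le> (u j)\<^sup>2 + c\<^sup>2 * (v j)\<^sup>2"
      using zero_le_power2[of "u j - c * v j"] by (simp add: power2_eq_square algebra_simps)
    from mult_right_mono[OF this, of "x j powr (2 - \<alpha>)"] show ?thesis
      by (simp add: algebra_simps)
  qed
  then have "(\<Sum>j\<in>UNIV. (u j + c * v j)\<^sup>2 * x j powr (2 - \<alpha>) / 2)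
      \<le> (\<Sum>j\<in>UNIV. (u j)\<^sup>2 * x j powr (2 - \<alpha>) + c\<^sup>2 * ((v j)\<^sup>2 * x j powr (2 - \<alpha>)))"
    by (rule sum_mono)
  then show ?thesis
    unfolding local_norm_sq_def by (simp add: sum_divide_distrib sum.distrib sum_distrib_left)
qed

section \<open>Regularised EXP3 along a fixed history\<close>

definition reg_loss_est :: "real \<Rightarrow> real \<Rightarrow> ('k::finite \<Rightarrow> real) \<Rightarrow> 'k \<Rightarrow> real \<Rightarrow> ('k \<Rightarrow> real)" where
  "reg_loss_est lam \<epsilon> x a l = (\<lambda>j. loss_est x a l j + lam * grad_R_eps \<epsilon> x j)"

lemma reg_loss_est_nonneg:
  assumes "x \<in> trunc_simplex \<epsilon>" "0 < \<epsilon>" "0 \<le> lam" "0 \<le> l"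
  shows "0 \<le> reg_loss_est lam \<epsilon> x a l j"
proof -
  have "\<epsilon> \<le> x j" "0 < x a" using trunc_simplex_bounds[OF assms(1,2)] by auto
  then have "0 \<le> grad_R_eps \<epsilon> x j" "0 \<le> loss_est x a l j"
    using assms by (auto simp: grad_R_eps_def loss_est_def divide_left_mono)
  then show ?thesis using assms(3) by (simp add: reg_loss_est_def)
qed

lemma x_of_in_trunc_simplex:
  assumes "0 < \<epsilon>" "real CARD('k::finite) * \<epsilon> \<le> 1"
  shows "x_of \<alpha> \<eta> lam \<epsilon> (h :: ('k \<times> real) list) \<in> trunc_simplex \<epsilon>"
  unfolding x_of_def proj_step_eq_mirror_proj by (rule mirror_proj_in_trunc_simplex[OF assms])

lemma x_of_snoc:
  assumes a: "0 \<le> \<alpha>" "\<alpha> \<le> 1" and e: "0 < \<epsilon>" "real CARD('k::finite) * \<epsilon> \<le> 1"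
  shows "x_of \<alpha> \<eta> lam \<epsilon> (h @ [(j::'k, l)])
    = mirror_proj \<alpha> \<epsilon> (step_grad \<alpha> \<eta> (reg_loss_est lam \<epsilon> (x_of \<alpha> \<eta> lam \<epsilon> h) j l) (x_of \<alpha> \<eta> lam \<epsilon> h))"
proof -
  let ?x = "x_of \<alpha> \<eta> lam \<epsilon> h"
  have "md_step \<alpha> \<eta> lam \<epsilon> (z_of \<alpha> \<eta> lam \<epsilon> h) j l
      = arg_min_on (step_objective \<alpha> \<eta> (reg_loss_est lam \<epsilon> ?x j l) ?x) pos_orthant"
    by (simp add: md_step_def x_of_def Let_def reg_loss_est_def step_objective_def[abs_def])
  moreover have "\<And>i. 0 < ?x i"
    using trunc_simplex_bounds[OF x_of_in_trunc_simplex[OF e] e(1)] by blast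
  ultimately show ?thesis
    by (simp add: x_of_def[of _ _ _ _ "h @ _"] z_of_def proj_step_eq_mirror_proj
        grad_phi_arg_min_step_objective[OF a])
qed

definition valid_history :: "('k \<times> real) list \<Rightarrow> bool" where
  "valid_history h \<longleftrightarrow> (\<forall>p\<in>set h. snd p \<in> {0..1})"

lemma x_round_in_trunc_simplex:
  assumes "0 < \<epsilon>" "real CARD('k::finite) * \<epsilon> \<le> 1"
  shows "x_round \<alpha> \<eta> lam \<epsilon> (h :: ('k \<times> real) list) t \<in> trunc_simplex \<epsilon>"
  unfolding x_round_def by (rule x_of_in_trunc_simplex[OF assms])

lemma x_round_Suc:
  assumes a: "0 \<le> \<alpha>" "\<alpha> \<le> 1" and e: "0 < \<epsilon>" "real CARD('k::finite) * \<epsilon> \<le> 1"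
    and t: "t < length h"
  shows "x_round \<alpha> \<eta> lam \<epsilon> h (Suc t) = mirror_proj \<alpha> \<epsilon> (step_grad \<alpha> \<eta>
      (\<lambda>i. lhat_round \<alpha> \<eta> lam \<epsilon> h t i + lam * grad_R_eps \<epsilon> (x_round \<alpha> \<eta> lam \<epsilon> h t) i)
      (x_round \<alpha> \<eta> lam \<epsilon> (h :: ('k \<times> real) list) t))"
proof -
  obtain a l where "h ! t = (a, l)" by fastforce
  moreover have "take (Suc t) h = take t h @ [h ! t]" using t by (simp add: take_Suc_conv_app_nth)
  ultimately show ?thesis
    by (simp add: x_round_def lhat_round_def x_of_snoc[OF a e] reg_loss_est_def)
qed

text \<open>Summing the one-step inequality telescopes the divergences to \<open>y\<close>.\<close>
lemma estimated_regret_le: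
  assumes a: "0 \<le> \<alpha>" "\<alpha> \<le> 1" and e: "0 < \<epsilon>" "real CARD('k::finite) * \<epsilon> \<le> 1"
    and lam: "0 \<le> lam" and eta: "0 < \<eta>" and y: "y \<in> trunc_simplex \<epsilon>"
    and h: "valid_history (h :: ('k \<times> real) list)" "length h = T"
  shows "(\<Sum>t<T. inner_vec (\<lambda>i. lhat_round \<alpha> \<eta> lam \<epsilon> h t i + lam * grad_R_eps \<epsilon> (x_round \<alpha> \<eta> lam \<epsilon> h t) i)
                         (\<lambda>i. x_round \<alpha> \<eta> lam \<epsilon> h t i - y i))
    \<le> bregman \<alpha> y (x_round \<alpha> \<eta> lam \<epsilon> h 0) / \<eta>
      + \<eta> * (\<Sum>t<T. local_norm_sq \<alpha> (x_round \<alpha> \<eta> lam \<epsilon> h t) (lhat_round \<alpha> \<eta> lam \<epsilon> h t))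
      + \<eta> * lam\<^sup>2 * (\<Sum>t<T. local_norm_sq \<alpha> (x_round \<alpha> \<eta> lam \<epsilon> h t) (grad_R_eps \<epsilon> (x_round \<alpha> \<eta> lam \<epsilon> h t)))"
proof -
  define X where "X = x_round \<alpha> \<eta> lam \<epsilon> h"
  define lt where "lt = (\<lambda>t i. lhat_round \<alpha> \<eta> lam \<epsilon> h t i + lam * grad_R_eps \<epsilon> (X t) i)"
  define D where "D = (\<lambda>t. bregman \<alpha> y (X t))"
  define N1 where "N1 = (\<lambda>t. local_norm_sq \<alpha> (X t) (lhat_round \<alpha> \<eta> lam \<epsilon> h t))"
  define N2 where "N2 = (\<lambda>t. local_norm_sq \<alpha> (X t) (grad_R_eps \<epsilon> (X t)))"
  have X: "X t \<in> trunc_simplex \<epsilon>" for t unfolding X_def by (rule x_round_in_trunc_simplex[OF e])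
  have step: "\<eta> * inner_vec (lt t) (\<lambda>i. X t i - y i) \<le> D t - D (Suc t) + \<eta>\<^sup>2 * (N1 t + lam\<^sup>2 * N2 t)"
    if t: "t < T" for t
  proof -
    have "snd (h ! t) \<in> {0..1}" using h t by (auto simp: valid_history_def)
    then have lt_nonneg: "0 \<le> lt t i" for i
      using reg_loss_est_nonneg[OF X[of t] e(1) lam, where l = "snd (h ! t)" and a = "fst (h ! t)" and j = i]
      by (simp add: lt_def reg_loss_est_def lhat_round_def X_def)
    have "X (Suc t) = mirror_proj \<alpha> \<epsilon> (step_grad \<alpha> \<eta> (lt t) (X t))"
      using x_round_Suc[OF a e] t h by (simp add: X_def lt_def)
    then have "\<eta> * inner_vec (lt t) (\<lambda>i. X t i - y i) \<le> D t - D (Suc t) + \<eta>\<^sup>2 / 2 * local_norm_sq \<alpha> (X t) (lt t)"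
      using mirror_descent_step_le[OF a e X y _ lt_nonneg] eta by (simp add: D_def)
    also have "\<eta>\<^sup>2 / 2 * local_norm_sq \<alpha> (X t) (lt t) \<le> \<eta>\<^sup>2 * (N1 t + lam\<^sup>2 * N2 t)"
      using local_norm_sq_add_le mult_left_mono[OF local_norm_sq_add_le, of "\<eta>\<^sup>2"]
      by (simp add: lt_def N1_def N2_def)
    finally show ?thesis by simp
  qed
  have "\<eta> * (\<Sum>t<T. inner_vec (lt t) (\<lambda>i. X t i - y i)) \<le> (\<Sum>t<T. D t - D (Suc t) + \<eta>\<^sup>2 * (N1 t + lam\<^sup>2 * N2 t))"
    unfolding sum_distrib_left by (rule sum_mono) (simp add: step)
  also have "\<dots> = D 0 - D T + \<eta>\<^sup>2 * ((\<Sum>t<T. N1 t) + lam\<^sup>2 * (\<Sum>t<T. N2 t))"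
    by (simp add: sum.distrib sum_distrib_left distrib_left sum_lessThan_telescope')
  also have "\<dots> \<le> D 0 + \<eta>\<^sup>2 * ((\<Sum>t<T. N1 t) + lam\<^sup>2 * (\<Sum>t<T. N2 t))"
    using bregman_nonneg[OF a, of y "X T"] trunc_simplex_bounds[OF y e(1)] trunc_simplex_bounds[OF X e(1)]
    by (simp add: D_def)
  finally show ?thesis
    using eta by (simp add: X_def lt_def D_def N1_def N2_def field_simps power2_eq_square)
qed

lemma mean_ln_le_ln_mean:
  assumes "0 < T" "\<And>t. t < T \<Longrightarrow> 0 < A t"
  shows "(1 / real T) * (\<Sum>t<T. ln (A t)) \<le> ln ((1 / real T) * (\<Sum>t<T. A t))"
proof -
  have "convex_on {0<..} (\<lambda>x. - ln x)" using ln_concave by (simp add: concave_on_def)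
  from convex_on_sum[OF _ _ this, of "{..<T}" "\<lambda>_. 1 / real T" A] show ?thesis
    using assms by (simp add: sum_distrib_left sum_negf lessThan_empty_iff)
qed

lemma R_eps_mean_le:
  assumes "0 < T" "\<And>t i. t < T \<Longrightarrow> 0 < X t i"
  shows "R_eps \<epsilon> (\<lambda>i. (1 / real T) * (\<Sum>t<T. X t i)) \<le> (1 / real T) * (\<Sum>t<T. R_eps \<epsilon> (X t :: 'k::finite \<Rightarrow> real))"
proof -
  have "(\<Sum>i\<in>UNIV. (1 / real T) * (\<Sum>t<T. ln (X t i))) \<le> (\<Sum>i\<in>UNIV. ln ((1 / real T) * (\<Sum>t<T. X t i)))"
    using mean_ln_le_ln_mean[OF assms(1)] assms(2) by (intro sum_mono) auto
  moreover have "(1 / real T) * (\<Sum>t<T. R_eps \<epsilon> (X t))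
      = - (\<Sum>i\<in>UNIV. (1 / real T) * (\<Sum>t<T. ln (X t i))) + (1 / \<epsilon>) * (\<Sum>i\<in>UNIV. (1 / real T) * (\<Sum>t<T. X t i))"
  proof -
    have "(\<Sum>t<T. R_eps \<epsilon> (X t))
        = - (\<Sum>t<T. \<Sum>i\<in>UNIV. ln (X t i)) + (1 / \<epsilon>) * (\<Sum>t<T. \<Sum>i\<in>UNIV. X t i)"
      by (simp add: R_eps_def sum.distrib sum_negf sum_subtractf sum_distrib_left)
    also have "\<dots> = - (\<Sum>i\<in>UNIV. \<Sum>t<T. ln (X t i)) + (1 / \<epsilon>) * (\<Sum>i\<in>UNIV. \<Sum>t<T. X t i)"
      by (simp only: sum.swap[of _ "{..<T}"])
    finally have sums: "(\<Sum>t<T. R_eps \<epsilon> (X t))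
        = - (\<Sum>i\<in>UNIV. \<Sum>t<T. ln (X t i)) + (1 / \<epsilon>) * (\<Sum>i\<in>UNIV. \<Sum>t<T. X t i)" .
    have "(1 / real T) * (\<Sum>t<T. R_eps \<epsilon> (X t))
        = - ((1 / real T) * (\<Sum>i\<in>UNIV. \<Sum>t<T. ln (X t i))) + (1 / \<epsilon>) * ((1 / real T) * (\<Sum>i\<in>UNIV. \<Sum>t<T. X t i))"
      unfolding sums by (simp add: algebra_simps)
    then show ?thesis by (simp only: sum_distrib_left)
  qed
  ultimately show ?thesis by (simp add: R_eps_def)
qed

lemma R_eps_diff_le:
  assumes "\<And>i. 0 < x i" "\<And>i. 0 < y i"
  shows "R_eps \<epsilon> x - R_eps \<epsilon> y \<le> inner_vec (grad_R_eps \<epsilon> x) (\<lambda>i. x i - (y::'k::finite \<Rightarrow> real) i)"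
proof -
  have "ln (y i) - ln (x i) + (x i - y i) / \<epsilon> \<le> (- 1 / x i + 1 / \<epsilon>) * (x i - y i)" for i
  proof -
    have "ln (y i / x i) \<le> y i / x i - 1" using assms by (intro ln_le_minus_one) simp
    then show ?thesis using assms[of i] by (simp add: ln_div field_simps)
  qed
  then have "(\<Sum>i\<in>UNIV. ln (y i) - ln (x i) + (x i - y i) / \<epsilon>) \<le> inner_vec (grad_R_eps \<epsilon> x) (\<lambda>i. x i - y i)"
    unfolding inner_vec_def grad_R_eps_def by (rule sum_mono)
  moreover have "R_eps \<epsilon> x - R_eps \<epsilon> y = (\<Sum>i\<in>UNIV. ln (y i) - ln (x i) + (x i - y i) / \<epsilon>)"
    by (simp add: R_eps_def sum.distrib sum_subtractf sum_divide_distrib diff_divide_distrib algebra_simps)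
  ultimately show ?thesis by simp
qed

lemma f_obj_mean_le:
  assumes "0 < T" "\<And>t i. t < T \<Longrightarrow> 0 < X t i" "0 \<le> lam"
  shows "f_obj \<mu> lam \<epsilon> (\<lambda>i. (1 / real T) * (\<Sum>t<T. X t i)) \<le> (1 / real T) * (\<Sum>t<T. f_obj \<mu> lam \<epsilon> (X t :: 'k::finite \<Rightarrow> real))"
proof -
  have "inner_vec \<mu> (\<lambda>i. (1 / real T) * (\<Sum>t<T. X t i)) = (1 / real T) * (\<Sum>t<T. inner_vec \<mu> (X t))"
    unfolding inner_vec_def sum_distrib_left by (simp only: sum.swap[of _ "{..<T}"]) (simp add: algebra_simps)
  moreover have "lam * R_eps \<epsilon> (\<lambda>i. (1 / real T) * (\<Sum>t<T. X t i)) \<le> lam * ((1 / real T) * (\<Sum>t<T. R_eps \<epsilon> (X t)))"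
    using R_eps_mean_le[OF assms(1,2)] assms(3) by (rule mult_left_mono)
  ultimately show ?thesis
    by (simp add: f_obj_def sum.distrib sum_distrib_left distrib_left)
qed

lemma f_obj_diff_le:
  assumes "\<And>i. 0 < x i" "\<And>i. 0 < y i" "0 \<le> lam"
  shows "f_obj \<mu> lam \<epsilon> x - f_obj \<mu> lam \<epsilon> y
    \<le> inner_vec (\<lambda>i. \<mu> i + lam * grad_R_eps \<epsilon> x i) (\<lambda>i. x i - (y::'k::finite \<Rightarrow> real) i)"
proof -
  have "lam * (R_eps \<epsilon> x - R_eps \<epsilon> y) \<le> lam * inner_vec (grad_R_eps \<epsilon> x) (\<lambda>i. x i - y i)"
    using R_eps_diff_le[OF assms(1,2)] assms(3) by (rule mult_left_mono)
  then show ?thesis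
    by (simp add: f_obj_def inner_vec_def sum.distrib sum_subtractf sum_distrib_left algebra_simps)
qed

text \<open>Convexity of \<open>f\<close>: Jensen for the average iterate, then the gradient inequality.\<close>
lemma f_obj_mean_gap_le:
  assumes T: "0 < T" and lam: "0 \<le> lam" and X: "\<And>t i. t < T \<Longrightarrow> 0 < X t i" and y: "\<And>i. 0 < y i"
  shows "f_obj \<mu> lam \<epsilon> (\<lambda>i. (1 / real T) * (\<Sum>t<T. X t i)) - f_obj \<mu> lam \<epsilon> y
    \<le> (1 / real T) * (\<Sum>t<T. inner_vec (\<lambda>i. \<mu> i + lam * grad_R_eps \<epsilon> (X t) i) (\<lambda>i. X t i - (y::'k::finite \<Rightarrow> real) i))"
proof -
  have "f_obj \<mu> lam \<epsilon> (\<lambda>i. (1 / real T) * (\<Sum>t<T. X t i)) - f_obj \<mu> lam \<epsilon> y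
      \<le> (1 / real T) * (\<Sum>t<T. f_obj \<mu> lam \<epsilon> (X t)) - f_obj \<mu> lam \<epsilon> y"
    using f_obj_mean_le[OF T _ lam, of X] X by simp
  also have "\<dots> = (1 / real T) * (\<Sum>t<T. f_obj \<mu> lam \<epsilon> (X t) - f_obj \<mu> lam \<epsilon> y)"
    using T by (simp add: sum_subtractf right_diff_distrib)
  also have "\<dots> \<le> (1 / real T) * (\<Sum>t<T. inner_vec (\<lambda>i. \<mu> i + lam * grad_R_eps \<epsilon> (X t) i) (\<lambda>i. X t i - y i))"
  proof (intro mult_left_mono sum_mono)
    fix t assume "t \<in> {..<T}"
    then show "f_obj \<mu> lam \<epsilon> (X t) - f_obj \<mu> lam \<epsilon> y
        \<le> inner_vec (\<lambda>i. \<mu> i + lam * grad_R_eps \<epsilon> (X t) i) (\<lambda>i. X t i - y i)"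
      using f_obj_diff_le[of "X t" y lam \<mu> \<epsilon>] X y lam by simp
  qed simp
  finally show ?thesis .
qed

section \<open>Expectations over histories\<close>

text \<open>Expectations over the remaining rounds integrate over all future losses at once, so a
  functional of histories counts as measurable when it is jointly measurable in the losses of
  every continuation of every history by a fixed sequence of arms.\<close>

abbreviation loss_seqs :: "(nat \<Rightarrow> real) measure" where
  "loss_seqs \<equiv> Pi\<^sub>M UNIV (\<lambda>_. borel)"

definition extend_history :: "('k \<times> real) list \<Rightarrow> 'k list \<Rightarrow> (nat \<Rightarrow> real) \<Rightarrow> ('k \<times> real) list" where
  "extend_history h js ls = h @ zip js (map ls [0..<length js])"

definition history_measurable :: "(('k \<times> real) list \<Rightarrow> real) \<Rightarrow> bool" where
  "history_measurable F \<longleftrightarrow> (\<forall>h js. (\<lambda>ls. F (extend_history h js ls)) \<in> borel_measurable loss_seqs)"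

lemma extend_history_Nil [simp]: "extend_history h [] ls = h"
  by (simp add: extend_history_def)

lemma extend_history_snoc: "extend_history h (js @ [a]) ls = extend_history h js ls @ [(a, ls (length js))]"
  by (simp add: extend_history_def)

lemma take_extend_history:
  "take t (extend_history h js ls)
    = (if t \<le> length h then take t h else extend_history h (take (t - length h) js) ls)"
proof -
  have "take k (zip js (map ls [0..<length js])) = zip (take k js) (map ls [0..<length (take k js)])" for k
    by (cases "k \<le> length js") (simp_all add: take_zip take_map take_upt min_def)
  then show ?thesis by (simp add: extend_history_def)
qed

lemma nth_extend_history:
  "extend_history h js ls ! t = (if t < length h then h ! t
     else if t < length h + length js then (js ! (t - length h), ls (t - length h))
     else [] ! (t - length h - length js))"
proof -
  have beyond: "zs ! k = [] ! (k - length zs)" if "length zs \<le> k" for zs :: "('a \<times> real) list" and k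
    using that by (induction zs arbitrary: k) (auto simp: nth_Cons split: nat.split)
  show ?thesis
    using beyond[of "zip js (map ls [0..<length js])" "t - length h"]
    by (auto simp: extend_history_def nth_append diff_diff_add)
qed

lemma dphi_scalar_measurable [measurable]: "dphi_scalar \<alpha> \<in> borel_measurable borel"
  unfolding dphi_scalar_def by measurable

lemma step_grad_apply:
  "step_grad \<alpha> \<eta> lt x j = (if \<alpha> = 1 \<or> (\<forall>j. 0 < x j powr (\<alpha> - 1) + (1 - \<alpha>) * \<eta> * lt j)
     then dphi_scalar \<alpha> (x j) - \<eta> * lt j else dphi_scalar \<alpha> (arg_min_junk j))"
  by (simp add: step_grad_def step_exists_def grad_phi_eq)

lemma step_grad_measurable:
  assumes [measurable]: "\<And>i. (\<lambda>\<omega>. x \<omega> i) \<in> borel_measurable M" "\<And>i. (\<lambda>\<omega>. lt \<omega> i) \<in> borel_measurable M"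
  shows "(\<lambda>\<omega>. step_grad \<alpha> \<eta> (lt \<omega>) (x \<omega> :: 'k::finite \<Rightarrow> real)) \<in> borel_measurable M"
proof (rule measurable_coordinatewise_then_product)
  fix j
  show "(\<lambda>\<omega>. step_grad \<alpha> \<eta> (lt \<omega>) (x \<omega>) j) \<in> borel_measurable M"
    unfolding step_grad_apply by measurable
qed

lemma x_of_extend_history_measurable:
  assumes a: "0 \<le> \<alpha>" "\<alpha> \<le> 1" and e: "0 < \<epsilon>" "real CARD('k::finite) * \<epsilon> \<le> 1"
  shows "(\<lambda>ls. x_of \<alpha> \<eta> lam \<epsilon> (extend_history h js ls) :: 'k \<Rightarrow> real) \<in> borel_measurable loss_seqs"
proof (induction js rule: rev_induct)
  case (snoc a js)
  have [measurable]: "(\<lambda>ls. x_of \<alpha> \<eta> lam \<epsilon> (extend_history h js ls) i) \<in> borel_measurable loss_seqs" for i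
    using measurable_product_then_coordinatewise[OF snoc.IH] .
  have "(\<lambda>ls. step_grad \<alpha> \<eta> (reg_loss_est lam \<epsilon> (x_of \<alpha> \<eta> lam \<epsilon> (extend_history h js ls)) a (ls (length js)))
      (x_of \<alpha> \<eta> lam \<epsilon> (extend_history h js ls))) \<in> borel_measurable loss_seqs"
    by (rule step_grad_measurable) (simp_all add: reg_loss_est_def loss_est_def grad_R_eps_def)
  moreover have "mirror_proj \<alpha> \<epsilon> \<in> borel_measurable (borel :: ('k \<Rightarrow> real) measure)"
    by (rule borel_measurable_continuous_onI[OF continuous_on_mirror_proj[OF a e]])
  ultimately show ?case
    by (simp add: extend_history_snoc x_of_snoc[OF a e] measurable_compose)
qed simp

lemma x_round_extend_history_measurable:
  assumes a: "0 \<le> \<alpha>" "\<alpha> \<le> 1" and e: "0 < \<epsilon>" "real CARD('k::finite) * \<epsilon> \<le> 1"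
  shows "(\<lambda>ls. x_round \<alpha> \<eta> lam \<epsilon> (extend_history h js ls) t (i::'k)) \<in> borel_measurable loss_seqs"
  using measurable_product_then_coordinatewise[OF x_of_extend_history_measurable[OF a e]]
  by (cases "t \<le> length h") (simp_all add: x_round_def take_extend_history)

lemma lhat_round_extend_history_measurable:
  assumes a: "0 \<le> \<alpha>" "\<alpha> \<le> 1" and e: "0 < \<epsilon>" "real CARD('k::finite) * \<epsilon> \<le> 1"
  shows "(\<lambda>ls. lhat_round \<alpha> \<eta> lam \<epsilon> (extend_history h js ls) t (i::'k)) \<in> borel_measurable loss_seqs"
proof -
  note [measurable] = x_round_extend_history_measurable[OF a e]
  define arm where "arm = fst (extend_history h js (\<lambda>_. 0) ! t)"
  have arm_eq: "fst (extend_history h js ls ! t) = arm" for ls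
    by (simp add: arm_def nth_extend_history)
  have [measurable]: "(\<lambda>ls. snd (extend_history h js ls ! t)) \<in> borel_measurable loss_seqs"
    by (cases "t < length h"; cases "t < length h + length js") (simp_all add: nth_extend_history)
  show ?thesis
    unfolding lhat_round_def loss_est_def arm_eq by measurable
qed

definition bounded_measurable :: "nat \<Rightarrow> (('k \<times> real) list \<Rightarrow> real) \<Rightarrow> bool" where
  "bounded_measurable N F \<longleftrightarrow> history_measurable F \<and>
     (\<exists>B\<ge>0. \<forall>h. valid_history h \<and> length h = N \<longrightarrow> \<bar>F h\<bar> \<le> B)"

lemma bounded_measurableI:
  assumes "history_measurable F" "\<And>h. valid_history h \<Longrightarrow> length h = N \<Longrightarrow> \<bar>F h\<bar> \<le> B"
  shows "bounded_measurable N F"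
proof -
  have "\<bar>F (replicate N (undefined, 0))\<bar> \<le> B"
    using assms(2) by (simp add: valid_history_def)
  then show ?thesis using assms unfolding bounded_measurable_def by (intro conjI exI[of _ B]) auto
qed

lemma bounded_measurable_add:
  assumes "bounded_measurable N F" "bounded_measurable N G"
  shows "bounded_measurable N (\<lambda>h. F h + G h)"
proof -
  obtain B where F: "history_measurable F" "\<And>h. valid_history h \<Longrightarrow> length h = N \<Longrightarrow> \<bar>F h\<bar> \<le> B"
    using assms(1) unfolding bounded_measurable_def by blast
  obtain C where G: "history_measurable G" "\<And>h. valid_history h \<Longrightarrow> length h = N \<Longrightarrow> \<bar>G h\<bar> \<le> C"
    using assms(2) unfolding bounded_measurable_def by blast
  have "history_measurable (\<lambda>h. F h + G h)"
    using F(1) G(1) by (auto simp: history_measurable_def intro!: borel_measurable_add)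
  moreover have "\<bar>F h + G h\<bar> \<le> B + C" if "valid_history h" "length h = N" for h
    using F(2)[OF that] G(2)[OF that] by linarith
  ultimately show ?thesis by (rule bounded_measurableI)
qed

lemma bounded_measurable_cmult:
  assumes "bounded_measurable N F"
  shows "bounded_measurable N (\<lambda>h. c * F h)"
proof -
  obtain B where meas: "history_measurable F"
    and bound: "\<And>h. valid_history h \<Longrightarrow> length h = N \<Longrightarrow> \<bar>F h\<bar> \<le> B"
    using assms unfolding bounded_measurable_def by blast
  have "history_measurable (\<lambda>h. c * F h)"
    using meas by (auto simp: history_measurable_def intro!: borel_measurable_times)
  moreover have "\<bar>c * F h\<bar> \<le> \<bar>c\<bar> * B" if "valid_history h" "length h = N" for h
    using mult_left_mono[OF bound[OF that], of "\<bar>c\<bar>"] by (simp add: abs_mult)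
  ultimately show ?thesis by (rule bounded_measurableI)
qed

lemma abs_integral_le_if_AE:
  fixes f :: "real \<Rightarrow> real"
  assumes M: "prob_space M" and ae: "AE x in M. \<bar>f x\<bar> \<le> B" and B: "0 \<le> B"
  shows "\<bar>\<integral>x. f x \<partial>M\<bar> \<le> B"
proof (cases "integrable M f")
  case True
  interpret prob_space M by (rule M)
  have const: "integrable M (\<lambda>_. B)" "integrable M (\<lambda>_. - B)" by auto
  have "(\<integral>x. f x \<partial>M) \<le> (\<integral>x. B \<partial>M)"
    by (rule integral_mono_AE[OF True const(1)]) (use ae in \<open>auto elim: AE_mp\<close>)
  moreover have "(\<integral>x. - B \<partial>M) \<le> (\<integral>x. f x \<partial>M)"
    by (rule integral_mono_AE[OF const(2) True]) (use ae in \<open>auto elim: AE_mp\<close>)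
  ultimately show ?thesis by (simp add: prob_space)
next
  case False
  then show ?thesis using B by (simp add: not_integrable_integral_eq)
qed

locale bandit_policy =
  fixes P :: "'k::finite \<Rightarrow> real measure" and pol :: "('k \<times> real) list \<Rightarrow> 'k \<Rightarrow> real"
  assumes prob_space_P: "\<And>a. prob_space (P a)" and sets_P: "\<And>a. sets (P a) = sets borel"
    and AE_P_unit: "\<And>a. AE l in P a. l \<in> {0..1}"
    and pol_nonneg: "\<And>h j. 0 \<le> pol h j" and sum_pol: "\<And>h. (\<Sum>j\<in>UNIV. pol h j) = 1"
    and pol_measurable: "\<And>j. history_measurable (\<lambda>h. pol h j)"
begin

abbreviation HE where "HE \<equiv> hist_exp P pol"

lemma AE_valid_snoc:
  assumes "valid_history h" "\<And>l. valid_history (h @ [(j, l)]) \<Longrightarrow> Q l"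
  shows "AE l in P j. Q l"
  using AE_P_unit[of j]
proof (rule AE_mp, intro AE_I2 impI)
  fix l :: real assume "l \<in> {0..1}"
  then show "Q l" using assms by (simp add: valid_history_def)
qed

lemma measurable_snoc:
  assumes "history_measurable G"
  shows "(\<lambda>l. G (h @ [(j, l)])) \<in> borel_measurable (P j)"
proof -
  have "(\<lambda>l. \<lambda>_::nat. l) \<in> measurable (P j) loss_seqs"
    by (rule measurable_PiM_single') (auto intro: measurable_ident_sets[OF sets_P])
  moreover have "(\<lambda>ls. G (extend_history h [j] ls)) \<in> borel_measurable loss_seqs"
    using assms by (simp add: history_measurable_def)
  ultimately have "(\<lambda>l. G (extend_history h [j] (\<lambda>_. l))) \<in> borel_measurable (P j)"
    by (rule measurable_compose)
  then show ?thesis by (simp add: extend_history_def)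
qed

lemma measurable_integral_snoc:
  assumes "history_measurable G"
  shows "(\<lambda>ls. \<integral>l. G (extend_history h js ls @ [(j, l)]) \<partial>P j) \<in> borel_measurable loss_seqs"
proof -
  interpret sigma_finite_measure "P j" using prob_space_imp_sigma_finite[OF prob_space_P] .
  define k where "k = length js"
  have "(\<lambda>p. (fst p)(k := snd p)) \<in> measurable (loss_seqs \<Otimes>\<^sub>M P j) loss_seqs"
  proof (rule measurable_PiM_single')
    fix i :: nat
    have "snd \<in> measurable (loss_seqs \<Otimes>\<^sub>M P j) borel"
      using measurable_cong_sets[OF refl sets_P] measurable_snd by blast
    then show "(\<lambda>p. ((fst p)(k := snd p)) i) \<in> borel_measurable (loss_seqs \<Otimes>\<^sub>M P j)"
      by (cases "i = k") simp_all
  qed simp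
  moreover have "(\<lambda>ls. G (extend_history h (js @ [j]) ls)) \<in> borel_measurable loss_seqs"
    using assms by (simp add: history_measurable_def)
  ultimately have "(\<lambda>p. G (extend_history h (js @ [j]) ((fst p)(k := snd p)))) \<in> borel_measurable (loss_seqs \<Otimes>\<^sub>M P j)"
    by (rule measurable_compose)
  moreover have "extend_history h (js @ [j]) ((fst p)(k := snd p)) = extend_history h js (fst p) @ [(j, snd p)]" for p
  proof -
    have "map ((fst p)(k := snd p)) [0..<k] = map (fst p) [0..<k]" by simp
    then show ?thesis by (simp add: extend_history_def k_def)
  qed
  ultimately have "(\<lambda>(ls, l). G (extend_history h js ls @ [(j, l)])) \<in> borel_measurable (loss_seqs \<Otimes>\<^sub>M P j)"
    by (simp add: case_prod_beta')
  then show ?thesis by (rule borel_measurable_lebesgue_integral)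
qed

lemma history_measurable_hist_exp:
  assumes "history_measurable F"
  shows "history_measurable (HE n F)"
proof (induction n)
  case (Suc n)
  have "(\<lambda>ls. pol (extend_history h js ls) j) \<in> borel_measurable loss_seqs" for h js j
    using pol_measurable[of j] by (simp add: history_measurable_def)
  then show ?case
    using measurable_integral_snoc[OF Suc.IH] unfolding history_measurable_def
    by (simp add: borel_measurable_sum borel_measurable_times)
qed (use assms in simp)

lemma abs_hist_exp_le:
  assumes "\<And>h'. valid_history h' \<Longrightarrow> length h' = length h + n \<Longrightarrow> \<bar>F h'\<bar> \<le> B"
    and "valid_history h" and "0 \<le> B"
  shows "\<bar>HE n F h\<bar> \<le> B"
  using assms(1,2)
proof (induction n arbitrary: h)
  case (Suc n)
  have "\<bar>\<integral>l. HE n F (h @ [(j, l)]) \<partial>P j\<bar> \<le> B" for j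
    by (intro abs_integral_le_if_AE[OF prob_space_P _ assms(3)] AE_valid_snoc[OF Suc.prems(2)] Suc.IH)
       (use Suc.prems(1) in auto)
  then have "\<bar>HE (Suc n) F h\<bar> \<le> (\<Sum>j\<in>UNIV. pol h j * B)"
    by (auto simp: abs_mult pol_nonneg intro!: order_trans[OF sum_abs] sum_mono mult_left_mono)
  then show ?case by (simp add: sum_distrib_right[symmetric] sum_pol)
qed simp

lemma integrable_hist_exp_snoc:
  assumes F: "bounded_measurable N F" and h: "valid_history h" "length h + Suc n = N"
  shows "integrable (P j) (\<lambda>l. HE n F (h @ [(j, l)]))"
proof -
  obtain B where B: "0 \<le> B" "\<And>h. valid_history h \<Longrightarrow> length h = N \<Longrightarrow> \<bar>F h\<bar> \<le> B"
    and m: "history_measurable F"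
    using F unfolding bounded_measurable_def by blast
  interpret prob_space "P j" by (rule prob_space_P)
  show ?thesis
  proof (rule integrable_const_bound[where B = B])
    show "AE l in P j. norm (HE n F (h @ [(j, l)])) \<le> B"
      using abs_hist_exp_le[OF _ _ B(1)] B(2) h(2) by (intro AE_valid_snoc[OF h(1)]) simp
    show "(\<lambda>l. HE n F (h @ [(j, l)])) \<in> borel_measurable (P j)"
      by (rule measurable_snoc[OF history_measurable_hist_exp[OF m]])
  qed
qed

lemma hist_exp_mono:
  assumes F: "bounded_measurable N F" and G: "bounded_measurable N G"
    and le: "\<And>h'. valid_history h' \<Longrightarrow> length h' = N \<Longrightarrow> F h' \<le> G h'"
  shows "valid_history h \<Longrightarrow> length h + n = N \<Longrightarrow> HE n F h \<le> HE n G h"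
proof (induction n arbitrary: h)
  case (Suc n)
  have len: "length (h @ [(j, l)]) + n = N" for j l using Suc.prems(2) by simp
  have "(\<integral>l. HE n F (h @ [(j, l)]) \<partial>P j) \<le> (\<integral>l. HE n G (h @ [(j, l)]) \<partial>P j)" for j
    by (intro integral_mono_AE integrable_hist_exp_snoc[OF F Suc.prems] integrable_hist_exp_snoc[OF G Suc.prems]
        AE_valid_snoc[OF Suc.prems(1)] Suc.IH len)
  then show ?case by (simp only: hist_exp.simps) (intro sum_mono mult_left_mono pol_nonneg)
qed (use le in simp)

lemma hist_exp_add:
  assumes F: "bounded_measurable N F" and G: "bounded_measurable N G"
  shows "valid_history h \<Longrightarrow> length h + n = N \<Longrightarrow> HE n (\<lambda>h. F h + G h) h = HE n F h + HE n G h"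
proof (induction n arbitrary: h)
  case (Suc n)
  have len: "length (h @ [(j, l)]) + n = N" for j l using Suc.prems(2) by simp
  have "(\<integral>l. HE n (\<lambda>h. F h + G h) (h @ [(j, l)]) \<partial>P j)
      = (\<integral>l. HE n F (h @ [(j, l)]) + HE n G (h @ [(j, l)]) \<partial>P j)" for j
  proof (rule integral_cong_AE)
    show "(\<lambda>l. HE n (\<lambda>h. F h + G h) (h @ [(j, l)])) \<in> borel_measurable (P j)"
      using bounded_measurable_add[OF F G] unfolding bounded_measurable_def
      by (blast intro: measurable_snoc history_measurable_hist_exp)
    show "(\<lambda>l. HE n F (h @ [(j, l)]) + HE n G (h @ [(j, l)])) \<in> borel_measurable (P j)"
      using F G unfolding bounded_measurable_def
      by (intro borel_measurable_add measurable_snoc history_measurable_hist_exp) simp_all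
    show "AE l in P j. HE n (\<lambda>h. F h + G h) (h @ [(j, l)]) = HE n F (h @ [(j, l)]) + HE n G (h @ [(j, l)])"
      by (intro AE_valid_snoc[OF Suc.prems(1)] Suc.IH len)
  qed
  also have "\<dots> j = (\<integral>l. HE n F (h @ [(j, l)]) \<partial>P j) + (\<integral>l. HE n G (h @ [(j, l)]) \<partial>P j)" for j
    by (intro Bochner_Integration.integral_add integrable_hist_exp_snoc[OF F Suc.prems]
        integrable_hist_exp_snoc[OF G Suc.prems])
  finally show ?case by (simp add: distrib_left sum.distrib)
qed simp

lemma hist_exp_cmult: "HE n (\<lambda>h. c * F h) h = c * HE n F h"
  by (induction n arbitrary: h) (simp_all add: sum_distrib_left mult.left_commute)

lemma hist_exp_const:
  assumes "\<And>h'. F (h @ h') = F h"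
  shows "HE n F h = F h"
  using assms
proof (induction n arbitrary: h)
  case (Suc n)
  have "HE n F (h @ [(j, l)]) = F h" for j l
    using Suc.IH[of "h @ [(j, l)]"] Suc.prems[of "[(j, l)]"] Suc.prems by simp
  then show ?case
    by (simp add: prob_space.prob_space[OF prob_space_P] sum_distrib_right[symmetric] sum_pol)
qed simp

end

section \<open>The expected regret bound\<close>

lemma abs_sum_le_card_mult:
  assumes "\<And>x. x \<in> S \<Longrightarrow> \<bar>f x\<bar> \<le> (c::real)"
  shows "\<bar>sum f S\<bar> \<le> real (card S) * c"
proof (cases "finite S")
  case True
  have "\<bar>sum f S\<bar> \<le> sum (\<lambda>x. \<bar>f x\<bar>) S" by (rule sum_abs)
  also have "\<dots> \<le> sum (\<lambda>_. c) S" by (rule sum_mono) (rule assms)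
  finally show ?thesis by simp
qed simp

lemma abs_mean_le:
  assumes "0 < T" "\<And>t. t < T \<Longrightarrow> \<bar>g t\<bar> \<le> (c::real)"
  shows "\<bar>(1 / real T) * (\<Sum>t<T. g t)\<bar> \<le> c"
proof -
  have "\<bar>\<Sum>t<T. g t\<bar> \<le> real T * c" using abs_sum_le_card_mult[of "{..<T}" g c] assms(2) by simp
  then show ?thesis using assms(1) by (simp add: abs_mult field_simps)
qed

locale reg_exp3 =
  fixes P :: "'k::finite \<Rightarrow> real measure" and \<alpha> \<eta> lam \<epsilon> :: real and T :: nat and y \<mu> :: "'k \<Rightarrow> real"
  assumes prob_space_P: "\<And>a. prob_space (P a)" and sets_P: "\<And>a. sets (P a) = sets borel"
    and AE_P_unit: "\<And>a. AE l in P a. l \<in> {0..1}"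
    and alpha: "0 \<le> \<alpha>" "\<alpha> \<le> 1" and eta: "0 < \<eta>" and lam: "0 < lam"
    and eps: "0 < \<epsilon>" "real CARD('k) * \<epsilon> \<le> 1" and T: "0 < T"
    and y: "y \<in> trunc_simplex \<epsilon>"
    and mu_eq: "\<mu> = (\<lambda>a. \<integral>l. l \<partial>P a)"
begin

abbreviation X :: "('k \<times> real) list \<Rightarrow> nat \<Rightarrow> 'k \<Rightarrow> real" where
  "X \<equiv> x_round \<alpha> \<eta> lam \<epsilon>"

abbreviation Lhat :: "('k \<times> real) list \<Rightarrow> nat \<Rightarrow> 'k \<Rightarrow> real" where
  "Lhat \<equiv> lhat_round \<alpha> \<eta> lam \<epsilon>"

lemma x_of_in: "x_of \<alpha> \<eta> lam \<epsilon> (h :: ('k \<times> real) list) \<in> trunc_simplex \<epsilon>"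
  by (rule x_of_in_trunc_simplex[OF eps])

lemma X_bounds: "\<epsilon> \<le> X h t i" "X h t i \<le> 1" "0 < X h t i"
  using trunc_simplex_bounds[OF x_of_in eps(1)] by (auto simp: x_round_def)

lemma y_bounds: "\<epsilon> \<le> y i" "y i \<le> 1" "0 < y i"
  using trunc_simplex_bounds[OF y eps(1)] by auto

lemma Lhat_bounds:
  assumes "valid_history h" "t < length h"
  shows "0 \<le> Lhat h t i" "Lhat h t i \<le> 1 / \<epsilon>"
proof -
  have "snd (h ! t) \<in> {0..1}" using assms by (simp add: valid_history_def)
  moreover have "\<epsilon> \<le> X h t i" "0 < X h t i" by (rule X_bounds)+
  moreover have "snd (h ! t) / X h t i \<le> 1 / \<epsilon>" if "snd (h ! t) \<in> {0..1}"
    using that X_bounds[of h t i] eps(1) by (auto intro: frac_le)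
  ultimately show "0 \<le> Lhat h t i" "Lhat h t i \<le> 1 / \<epsilon>"
    using eps(1) by (auto simp: lhat_round_def loss_est_def)
qed

lemma grad_R_eps_bounds: "0 \<le> grad_R_eps \<epsilon> (X h t) i" "grad_R_eps \<epsilon> (X h t) i \<le> 1 / \<epsilon>"
  using X_bounds[of h t i] eps(1) by (auto simp: grad_R_eps_def divide_left_mono)

lemma mu_bounds: "0 \<le> \<mu> i" "\<mu> i \<le> 1"
proof -
  have "AE l in P i. 0 \<le> l" "AE l in P i. \<bar>l\<bar> \<le> 1" using AE_P_unit[of i] by (auto elim: AE_mp)
  then have "0 \<le> (\<integral>l. l \<partial>P i)" "\<bar>\<integral>l. l \<partial>P i\<bar> \<le> 1"
    by (intro integral_nonneg_AE abs_integral_le_if_AE[OF prob_space_P]; simp)+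
  then show "0 \<le> \<mu> i" "\<mu> i \<le> 1" by (auto simp: mu_eq)
qed

lemma X_measurable [measurable]: "(\<lambda>ls. X (extend_history h js ls) t i) \<in> borel_measurable loss_seqs"
  by (rule x_round_extend_history_measurable[OF alpha eps])

lemma Lhat_measurable [measurable]: "(\<lambda>ls. Lhat (extend_history h js ls) t i) \<in> borel_measurable loss_seqs"
  by (rule lhat_round_extend_history_measurable[OF alpha eps])

sublocale bandit_policy P "x_of \<alpha> \<eta> lam \<epsilon>"
proof (rule bandit_policy.intro)
  fix h :: "('k \<times> real) list" and j :: 'k
  show "0 \<le> x_of \<alpha> \<eta> lam \<epsilon> h j"
    using trunc_simplex_bounds(3)[OF x_of_in eps(1)] by (rule less_imp_le)
  show "(\<Sum>j\<in>UNIV. x_of \<alpha> \<eta> lam \<epsilon> h j) = 1"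
    using x_of_in[of h] by (simp add: trunc_simplex_def)
  show "history_measurable (\<lambda>h. x_of \<alpha> \<eta> lam \<epsilon> h j)"
    using measurable_product_then_coordinatewise[OF x_of_extend_history_measurable[OF alpha eps]]
    by (simp add: history_measurable_def)
qed (fact prob_space_P sets_P AE_P_unit)+

definition objective_gap :: "('k \<times> real) list \<Rightarrow> real" where
  "objective_gap h = f_obj \<mu> lam \<epsilon> (\<lambda>i. (1 / real T) * (\<Sum>t<T. X h t i)) - f_obj \<mu> lam \<epsilon> y"

definition linearized_gap :: "('k \<times> real) list \<Rightarrow> real" where
  "linearized_gap h = (1 / real T) * (\<Sum>t<T. inner_vec (\<lambda>i. \<mu> i + lam * grad_R_eps \<epsilon> (X h t) i) (\<lambda>i. X h t i - y i))"

definition estimated_gap :: "('k \<times> real) list \<Rightarrow> real" where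
  "estimated_gap h = (1 / real T) * (\<Sum>t<T. inner_vec (\<lambda>i. Lhat h t i + lam * grad_R_eps \<epsilon> (X h t) i) (\<lambda>i. X h t i - y i))"

text \<open>The estimation error of round \<open>t\<close>, a martingale difference.\<close>
definition noise :: "nat \<Rightarrow> ('k \<times> real) list \<Rightarrow> real" where
  "noise t h = inner_vec (\<lambda>i. \<mu> i - Lhat h t i) (\<lambda>i. X h t i - y i)"

definition regret_bound :: "('k \<times> real) list \<Rightarrow> real" where
  "regret_bound h = bregman \<alpha> y (X h 0) / (\<eta> * real T)
     + (\<eta> / real T) * (\<Sum>t<T. local_norm_sq \<alpha> (X h t) (Lhat h t))
     + (\<eta> * lam\<^sup>2 / real T) * (\<Sum>t<T. local_norm_sq \<alpha> (X h t) (grad_R_eps \<epsilon> (X h t)))"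

lemma objective_gap_le_linearized_gap: "objective_gap h \<le> linearized_gap h"
  unfolding objective_gap_def linearized_gap_def
  using lam X_bounds(3) y_bounds(3) by (intro f_obj_mean_gap_le[OF T]) auto

lemma linearized_gap_eq: "linearized_gap h = estimated_gap h + (1 / real T) * (\<Sum>t<T. noise t h)"
proof -
  have "inner_vec (\<lambda>i. \<mu> i + lam * grad_R_eps \<epsilon> (X h t) i) (\<lambda>i. X h t i - y i)
      = inner_vec (\<lambda>i. Lhat h t i + lam * grad_R_eps \<epsilon> (X h t) i) (\<lambda>i. X h t i - y i) + noise t h" for t
    by (simp add: inner_vec_def noise_def sum.distrib[symmetric] algebra_simps)
  then show ?thesis
    by (simp add: linearized_gap_def estimated_gap_def sum.distrib distrib_left)
qed

lemma estimated_gap_le_regret_bound: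
  assumes "valid_history h" "length h = T"
  shows "estimated_gap h \<le> regret_bound h"
proof -
  have "estimated_gap h \<le> (1 / real T) * (bregman \<alpha> y (X h 0) / \<eta> + \<eta> * (\<Sum>t<T. local_norm_sq \<alpha> (X h t) (Lhat h t))
      + \<eta> * lam\<^sup>2 * (\<Sum>t<T. local_norm_sq \<alpha> (X h t) (grad_R_eps \<epsilon> (X h t))))"
    unfolding estimated_gap_def
    using estimated_regret_le[OF alpha eps _ eta y assms] lam by (intro mult_left_mono) simp_all
  also have "\<dots> = regret_bound h"
    using T eta by (simp add: regret_bound_def field_simps)
  finally show ?thesis .
qed

end

context reg_exp3
begin

lemma abs_inner_vec_X_minus_y_le:
  assumes "\<And>i. \<bar>u i\<bar> \<le> c"
  shows "\<bar>inner_vec u (\<lambda>i. X h t i - y i)\<bar> \<le> real CARD('k) * c"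
proof -
  have "\<bar>u i * (X h t i - y i)\<bar> \<le> c" for i
  proof -
    have "\<bar>X h t i - y i\<bar> \<le> 1" using X_bounds[of h t i] y_bounds[of i] by (simp add: abs_le_iff)
    then have "\<bar>u i\<bar> * \<bar>X h t i - y i\<bar> \<le> c * 1"
      using assms[of i] by (intro mult_mono) auto
    then show ?thesis by (simp add: abs_mult)
  qed
  then show ?thesis
    unfolding inner_vec_def by (intro abs_sum_le_card_mult)
qed

lemma abs_local_norm_sq_X_le:
  assumes "\<And>i. 0 \<le> v i \<and> v i \<le> 1 / \<epsilon>"
  shows "\<bar>local_norm_sq \<alpha> (X h t) v\<bar> \<le> real CARD('k) * (1 / \<epsilon>)\<^sup>2"
proof -
  have "\<bar>(v i)\<^sup>2 * X h t i powr (2 - \<alpha>)\<bar> \<le> (1 / \<epsilon>)\<^sup>2" for i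
  proof -
    have "X h t i powr (2 - \<alpha>) \<le> 1"
      using powr_mono2[of "2 - \<alpha>" "X h t i" 1] alpha X_bounds[of h t i] by simp
    moreover have "(v i)\<^sup>2 \<le> (1 / \<epsilon>)\<^sup>2" using assms[of i] by (simp add: power_mono)
    ultimately have "(v i)\<^sup>2 * X h t i powr (2 - \<alpha>) \<le> (1 / \<epsilon>)\<^sup>2 * 1"
      by (intro mult_mono) auto
    then show ?thesis by simp
  qed
  then show ?thesis
    unfolding local_norm_sq_def by (intro abs_sum_le_card_mult)
qed

lemma abs_f_obj_le:
  assumes "\<And>i. \<epsilon> \<le> x i" "\<And>i. x i \<le> 1"
  shows "\<bar>f_obj \<mu> lam \<epsilon> x\<bar> \<le> real CARD('k) * (1 + lam * (- ln \<epsilon> + 1 / \<epsilon>))"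
proof -
  have x: "0 < x i" for i using assms(1)[of i] eps(1) by simp
  have "\<bar>\<mu> i * x i\<bar> \<le> 1" for i
    using mult_mono[OF mu_bounds(2) assms(2)] mu_bounds(1)[of i] x[of i] by (simp add: abs_mult)
  then have linear: "\<bar>inner_vec \<mu> x\<bar> \<le> real CARD('k) * 1"
    unfolding inner_vec_def by (intro abs_sum_le_card_mult)
  have "\<bar>x i / \<epsilon> - ln (x i)\<bar> \<le> - ln \<epsilon> + 1 / \<epsilon>" for i
  proof -
    have "ln \<epsilon> \<le> ln (x i)" "ln (x i) \<le> 0" using assms[of i] x[of i] eps(1) by simp_all
    moreover have "0 \<le> x i / \<epsilon>" "x i / \<epsilon> \<le> 1 / \<epsilon>"
      using assms(2)[of i] x[of i] eps(1) by (simp_all add: divide_right_mono)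
    ultimately show ?thesis by (simp add: abs_le_iff)
  qed
  then have "\<bar>\<Sum>i\<in>UNIV. x i / \<epsilon> - ln (x i)\<bar> \<le> real CARD('k) * (- ln \<epsilon> + 1 / \<epsilon>)"
    by (intro abs_sum_le_card_mult)
  moreover have "R_eps \<epsilon> x = (\<Sum>i\<in>UNIV. x i / \<epsilon> - ln (x i))"
    by (simp add: R_eps_def sum_subtractf sum_divide_distrib)
  ultimately have "\<bar>lam * R_eps \<epsilon> x\<bar> \<le> lam * (real CARD('k) * (- ln \<epsilon> + 1 / \<epsilon>))"
    using lam by (simp add: abs_mult)
  then show ?thesis
    using linear abs_triangle_ineq[of "inner_vec \<mu> x" "lam * R_eps \<epsilon> x"]
    unfolding f_obj_def by (simp add: algebra_simps)
qed

lemma bounded_measurable_objective_gap: "bounded_measurable N objective_gap"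
proof (rule bounded_measurableI)
  show "history_measurable objective_gap"
    unfolding history_measurable_def objective_gap_def f_obj_def inner_vec_def R_eps_def
    by (intro allI) measurable
  have mean: "\<epsilon> \<le> (1 / real T) * (\<Sum>t<T. X h t i)" "(1 / real T) * (\<Sum>t<T. X h t i) \<le> 1" for h i
    using sum_mono[of "{..<T}" "\<lambda>_. \<epsilon>" "\<lambda>t. X h t i"] sum_mono[of "{..<T}" "\<lambda>t. X h t i" "\<lambda>_. 1"]
      X_bounds T by (simp_all add: field_simps)
  fix h :: "('k \<times> real) list"
  have "\<bar>f_obj \<mu> lam \<epsilon> (\<lambda>i. (1 / real T) * (\<Sum>t<T. X h t i))\<bar> \<le> real CARD('k) * (1 + lam * (- ln \<epsilon> + 1 / \<epsilon>))"
    by (rule abs_f_obj_le) (rule mean)+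
  moreover have "\<bar>f_obj \<mu> lam \<epsilon> y\<bar> \<le> real CARD('k) * (1 + lam * (- ln \<epsilon> + 1 / \<epsilon>))"
    by (rule abs_f_obj_le) (rule y_bounds)+
  ultimately show "\<bar>objective_gap h\<bar> \<le> 2 * (real CARD('k) * (1 + lam * (- ln \<epsilon> + 1 / \<epsilon>)))"
    unfolding objective_gap_def by linarith
qed

lemma bounded_measurable_linearized_gap: "bounded_measurable N linearized_gap"
proof (rule bounded_measurableI)
  show "history_measurable linearized_gap"
    unfolding history_measurable_def linearized_gap_def inner_vec_def grad_R_eps_def
    by (intro allI) measurable
  have lam_grad: "0 \<le> lam * grad_R_eps \<epsilon> (X h t) i" "lam * grad_R_eps \<epsilon> (X h t) i \<le> lam / \<epsilon>" for h t i
    using mult_left_mono[OF grad_R_eps_bounds(2)[of h t i], of lam] grad_R_eps_bounds(1)[of h t i] lam by simp_all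
  have "\<bar>\<mu> i + lam * grad_R_eps \<epsilon> (X h t) i\<bar> \<le> 1 + lam / \<epsilon>" for h t i
    using mu_bounds[of i] lam_grad[of h t i] by (simp add: abs_le_iff)
  then show "\<bar>linearized_gap h\<bar> \<le> real CARD('k) * (1 + lam / \<epsilon>)" for h
    unfolding linearized_gap_def by (intro abs_mean_le[OF T] abs_inner_vec_X_minus_y_le)
qed

lemma bounded_measurable_estimated_gap: "bounded_measurable T estimated_gap"
proof (rule bounded_measurableI)
  show "history_measurable estimated_gap"
    unfolding history_measurable_def estimated_gap_def inner_vec_def grad_R_eps_def
    by (intro allI) measurable
  fix h :: "('k \<times> real) list" assume h: "valid_history h" "length h = T"
  have "\<bar>Lhat h t i + lam * grad_R_eps \<epsilon> (X h t) i\<bar> \<le> 1 / \<epsilon> + lam / \<epsilon>" if "t < T" for t i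
  proof -
    have "0 \<le> lam * grad_R_eps \<epsilon> (X h t) i" "lam * grad_R_eps \<epsilon> (X h t) i \<le> lam / \<epsilon>"
      using mult_left_mono[OF grad_R_eps_bounds(2)[of h t i], of lam] grad_R_eps_bounds(1)[of h t i] lam by simp_all
    then show ?thesis using Lhat_bounds[OF h(1), of t i] that h(2) by (simp add: abs_le_iff)
  qed
  then show "\<bar>estimated_gap h\<bar> \<le> real CARD('k) * (1 / \<epsilon> + lam / \<epsilon>)"
    unfolding estimated_gap_def by (intro abs_mean_le[OF T] abs_inner_vec_X_minus_y_le)
qed

lemma bounded_measurable_regret_bound: "bounded_measurable T regret_bound"
proof (rule bounded_measurableI)
  show "history_measurable regret_bound"
    unfolding history_measurable_def regret_bound_def bregman_def mirror_phi_def grad_phi_def inner_vec_def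
      local_norm_sq_def grad_R_eps_def
    by (intro allI) measurable
  define C where "C = real CARD('k) * (1 / \<epsilon>)\<^sup>2"
  fix h :: "('k \<times> real) list" assume h: "valid_history h" "length h = T"
  have "\<bar>(1 / real T) * (\<Sum>t<T. local_norm_sq \<alpha> (X h t) (Lhat h t))\<bar> \<le> C"
    unfolding C_def using Lhat_bounds[OF h(1)] h(2)
    by (intro abs_mean_le[OF T] abs_local_norm_sq_X_le) auto
  from mult_left_mono[OF this, of \<eta>]
  have "\<bar>\<eta> * ((1 / real T) * (\<Sum>t<T. local_norm_sq \<alpha> (X h t) (Lhat h t)))\<bar> \<le> \<eta> * C"
    using eta by (simp add: abs_mult)
  moreover have "\<bar>(1 / real T) * (\<Sum>t<T. local_norm_sq \<alpha> (X h t) (grad_R_eps \<epsilon> (X h t)))\<bar> \<le> C"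
    unfolding C_def using grad_R_eps_bounds
    by (intro abs_mean_le[OF T] abs_local_norm_sq_X_le) auto
  from mult_left_mono[OF this, of "\<eta> * lam\<^sup>2"]
  have "\<bar>\<eta> * lam\<^sup>2 * ((1 / real T) * (\<Sum>t<T. local_norm_sq \<alpha> (X h t) (grad_R_eps \<epsilon> (X h t))))\<bar>
      \<le> \<eta> * lam\<^sup>2 * C"
    using eta by (simp add: abs_mult)
  moreover have "regret_bound h = bregman \<alpha> y (x_of \<alpha> \<eta> lam \<epsilon> []) / (\<eta> * real T)
      + \<eta> * ((1 / real T) * (\<Sum>t<T. local_norm_sq \<alpha> (X h t) (Lhat h t)))
      + \<eta> * lam\<^sup>2 * ((1 / real T) * (\<Sum>t<T. local_norm_sq \<alpha> (X h t) (grad_R_eps \<epsilon> (X h t))))"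
    by (simp add: regret_bound_def x_round_def)
  ultimately show "\<bar>regret_bound h\<bar> \<le> \<bar>bregman \<alpha> y (x_of \<alpha> \<eta> lam \<epsilon> []) / (\<eta> * real T)\<bar> + \<eta> * C + \<eta> * lam\<^sup>2 * C"
    by linarith
qed

lemma bounded_measurable_noise_sum:
  assumes "S \<subseteq> {..<N}"
  shows "bounded_measurable N (\<lambda>h. \<Sum>t\<in>S. noise t h)"
proof (rule bounded_measurableI)
  show "history_measurable (\<lambda>h. \<Sum>t\<in>S. noise t h)"
    unfolding history_measurable_def noise_def inner_vec_def by (intro allI) measurable
  fix h :: "('k \<times> real) list" assume h: "valid_history h" "length h = N"
  have "\<bar>noise t h\<bar> \<le> real CARD('k) * (1 + 1 / \<epsilon>)" if "t \<in> S" for t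
    unfolding noise_def
  proof (rule abs_inner_vec_X_minus_y_le)
    fix i
    show "\<bar>\<mu> i - Lhat h t i\<bar> \<le> 1 + 1 / \<epsilon>"
      using mu_bounds[of i] Lhat_bounds[OF h(1), of t i] that assms h(2) eps(1) by (auto simp: abs_le_iff)
  qed
  then have "\<bar>\<Sum>t\<in>S. noise t h\<bar> \<le> real (card S) * (real CARD('k) * (1 + 1 / \<epsilon>))"
    by (rule abs_sum_le_card_mult)
  also have "\<dots> \<le> real N * (real CARD('k) * (1 + 1 / \<epsilon>))"
    using card_mono[OF _ assms] eps(1) by (intro mult_right_mono) auto
  finally show "\<bar>\<Sum>t\<in>S. noise t h\<bar> \<le> real N * (real CARD('k) * (1 + 1 / \<epsilon>))" .
qed

lemma noise_append: "t < length h \<Longrightarrow> noise t (h @ h') = noise t h"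
  by (simp add: noise_def x_round_def lhat_round_def nth_append)

lemma integral_noise_snoc:
  "(\<integral>l. noise (length h) (h @ [(j, l)]) \<partial>P j)
    = inner_vec \<mu> (\<lambda>i. x_of \<alpha> \<eta> lam \<epsilon> h i - y i)
      - \<mu> j * ((x_of \<alpha> \<eta> lam \<epsilon> h j - y j) / x_of \<alpha> \<eta> lam \<epsilon> h j)"
proof -
  define x where "x = x_of \<alpha> \<eta> lam \<epsilon> h"
  interpret prob_space "P j" by (rule prob_space_P)
  have "noise (length h) (h @ [(j, l)]) = inner_vec \<mu> (\<lambda>i. x i - y i) - l * ((x j - y j) / x j)" for l
  proof -
    have "(\<Sum>i\<in>UNIV. loss_est x j l i * (x i - y i)) = l * ((x j - y j) / x j)"
      by (simp add: loss_est_def if_distrib[of "\<lambda>c. c * _"] cong: if_cong)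
    then show ?thesis
      by (simp add: noise_def inner_vec_def x_round_def lhat_round_def x_def left_diff_distrib sum_subtractf)
  qed
  moreover have "integrable (P j) (\<lambda>l. l)"
    using AE_P_unit[of j] measurable_ident_sets[OF sets_P]
    by (intro integrable_const_bound[where B = 1]) (auto elim: AE_mp)
  ultimately show ?thesis by (simp add: mu_eq prob_space x_def)
qed

text \<open>Unbiasedness of the importance-weighted estimate: arm \<open>j\<close> is drawn with probability
  \<open>x\<^sub>j\<close> and then charged \<open>l / x\<^sub>j\<close>.\<close>
lemma expected_noise_snoc_eq_0:
  "(\<Sum>j\<in>UNIV. x_of \<alpha> \<eta> lam \<epsilon> h j * (\<integral>l. noise (length h) (h @ [(j, l)]) \<partial>P j)) = 0"
proof -
  define x where "x = x_of \<alpha> \<eta> lam \<epsilon> h"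
  have "(\<Sum>j\<in>UNIV. x j * (\<integral>l. noise (length h) (h @ [(j, l)]) \<partial>P j))
      = (\<Sum>j\<in>UNIV. inner_vec \<mu> (\<lambda>i. x i - y i) * x j - \<mu> j * (x j - y j))"
  proof (rule sum.cong)
    fix j
    have "x j \<noteq> 0" using trunc_simplex_bounds(3)[OF x_of_in[of h] eps(1), of j] by (simp add: x_def)
    then show "x j * (\<integral>l. noise (length h) (h @ [(j, l)]) \<partial>P j)
        = inner_vec \<mu> (\<lambda>i. x i - y i) * x j - \<mu> j * (x j - y j)"
      by (simp add: integral_noise_snoc x_def[symmetric] field_simps)
  qed simp
  also have "\<dots> = inner_vec \<mu> (\<lambda>i. x i - y i) * (\<Sum>j\<in>UNIV. x j) - (\<Sum>j\<in>UNIV. \<mu> j * (x j - y j))"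
    by (simp add: sum_subtractf sum_distrib_left)
  also have "\<dots> = 0"
    using x_of_in[of h] by (simp add: x_def inner_vec_def trunc_simplex_def)
  finally show ?thesis by (simp add: x_def)
qed

lemma hist_exp_noise_sum:
  "valid_history h \<Longrightarrow> length h + n = N \<Longrightarrow> HE n (\<lambda>h'. \<Sum>t\<in>{length h..<N}. noise t h') h = 0"
proof (induction n arbitrary: h)
  case (Suc n)
  define k where "k = length h"
  have k: "k < N" using Suc.prems(2) by (simp add: k_def)
  have bm_k: "bounded_measurable N (noise k)"
    using bounded_measurable_noise_sum[of "{k}" N] k by simp
  have bm_tail: "bounded_measurable N (\<lambda>h'. \<Sum>t\<in>{Suc k..<N}. noise t h')"
    and bm_all: "bounded_measurable N (\<lambda>h'. \<Sum>t\<in>{k..<N}. noise t h')"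
    by (rule bounded_measurable_noise_sum; auto)+
  have "HE n (\<lambda>h'. \<Sum>t\<in>{k..<N}. noise t h') (h @ [(j, l)]) = noise k (h @ [(j, l)])"
    if "valid_history (h @ [(j, l)])" for j l
  proof -
    have len: "length (h @ [(j, l)]) + n = N" using Suc.prems(2) by simp
    have "HE n (\<lambda>h'. \<Sum>t\<in>{k..<N}. noise t h') (h @ [(j, l)])
        = HE n (noise k) (h @ [(j, l)]) + HE n (\<lambda>h'. \<Sum>t\<in>{Suc k..<N}. noise t h') (h @ [(j, l)])"
      using hist_exp_add[OF bm_k bm_tail that len] by (simp add: sum.atLeast_Suc_lessThan[OF k])
    also have "HE n (noise k) (h @ [(j, l)]) = noise k (h @ [(j, l)])"
      by (rule hist_exp_const) (simp add: noise_append k_def del: append_assoc add: append_assoc[symmetric])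
    also have "HE n (\<lambda>h'. \<Sum>t\<in>{Suc k..<N}. noise t h') (h @ [(j, l)]) = 0"
      using Suc.IH[OF that len] by (simp add: k_def)
    finally show ?thesis by simp
  qed
  then have "(\<integral>l. HE n (\<lambda>h'. \<Sum>t\<in>{k..<N}. noise t h') (h @ [(j, l)]) \<partial>P j)
      = (\<integral>l. noise k (h @ [(j, l)]) \<partial>P j)" for j
    using bm_all bm_k unfolding bounded_measurable_def
    by (intro integral_cong_AE AE_valid_snoc[OF Suc.prems(1)] measurable_snoc history_measurable_hist_exp) auto
  then show ?case
    using expected_noise_snoc_eq_0[of h] by (simp add: k_def)
qed simp

end

theorem lemma5:
  fixes P :: "'k::finite \<Rightarrow> real measure"
    and \<alpha> \<eta> lam \<epsilon> :: real and T :: nat and y :: "'k \<Rightarrow> real"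
  assumes P_prob: "\<And>a. prob_space (P a)"
    and P_sets: "\<And>a. sets (P a) = sets borel"
    and P_supp: "\<And>a. AE l in P a. l \<in> {0..1}"
    and alpha: "0 \<le> \<alpha>" "\<alpha> \<le> 1"
    and eta: "\<eta> > 0" and lam: "lam > 0"
    and eps: "\<epsilon> > 0" "real CARD('k) * \<epsilon> \<le> 1"
    and T: "T > 0"
    and y: "y \<in> trunc_simplex \<epsilon>"
  defines "\<mu> \<equiv> (\<lambda>a. \<integral>l. l \<partial>(P a))"
  shows
    "hist_exp P (x_of \<alpha> \<eta> lam \<epsilon>) T
       (\<lambda>h. f_obj \<mu> lam \<epsilon> (\<lambda>i. (1 / real T) * (\<Sum>t<T. x_round \<alpha> \<eta> lam \<epsilon> h t i))
            - f_obj \<mu> lam \<epsilon> y) []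
     \<le> hist_exp P (x_of \<alpha> \<eta> lam \<epsilon>) T
       (\<lambda>h. bregman \<alpha> y (x_round \<alpha> \<eta> lam \<epsilon> h 0) / (\<eta> * real T)
            + (\<eta> / real T) * (\<Sum>t<T. local_norm_sq \<alpha> (x_round \<alpha> \<eta> lam \<epsilon> h t) (lhat_round \<alpha> \<eta> lam \<epsilon> h t))
            + (\<eta> * lam\<^sup>2 / real T) * (\<Sum>t<T. local_norm_sq \<alpha> (x_round \<alpha> \<eta> lam \<epsilon> h t)
                                              (grad_R_eps \<epsilon> (x_round \<alpha> \<eta> lam \<epsilon> h t)))) []"
proof -
  interpret reg_exp3 P \<alpha> \<eta> lam \<epsilon> T y \<mu>
    by (rule reg_exp3.intro) (use assms in \<open>simp_all add: \<mu>_def\<close>)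
  have start: "valid_history ([] :: ('k \<times> real) list)" "length ([] :: ('k \<times> real) list) + T = T"
    by (simp_all add: valid_history_def)
  have "HE T objective_gap [] \<le> HE T linearized_gap []"
    using objective_gap_le_linearized_gap
    by (intro hist_exp_mono[OF bounded_measurable_objective_gap bounded_measurable_linearized_gap _ start])
  also have "\<dots> = HE T estimated_gap [] + HE T (\<lambda>h. (1 / real T) * (\<Sum>t<T. noise t h)) []"
    unfolding linearized_gap_eq[abs_def]
    by (rule hist_exp_add[OF bounded_measurable_estimated_gap
          bounded_measurable_cmult[OF bounded_measurable_noise_sum[OF order_refl]] start])
  also have "\<dots> = HE T estimated_gap []"
    using hist_exp_noise_sum[OF start] unfolding hist_exp_cmult by (simp add: atLeast0LessThan)
  also have "HE T estimated_gap [] \<le> HE T regret_bound []"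
    using estimated_gap_le_regret_bound
    by (intro hist_exp_mono[OF bounded_measurable_estimated_gap bounded_measurable_regret_bound _ start])
  finally show ?thesis
    unfolding objective_gap_def[abs_def] regret_bound_def[abs_def] .
qed

end
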